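(* Let $\Lambda$ be a block and $\lambda\in\Lambda$. (i) The number of weights $\mu$ with $\mu\supset\lambda$ is $2^{\mathrm{def}(\lambda)}$. (ii) The number of weights $\mu$ with $\mu\subset\lambda$ is finite if and only if $\mathrm{def}(\Lambda)<\infty$. (iii) For each $j\in\mathbb Z$, the number of weights $\mu$ with $\mu\subset\lambda$ and $\deg(\underline\mu\lambda)=j$ is finite.
   Context: A number line carries vertices indexed by consecutive integers (finitely or infinitely many). A weight labels each vertex by $\circ,\times,\vee,\wedge$ such that outside a finite set no $\vee$ is left of an $\wedge$. $\lambda\sim\mu$ if $\mu$ is obtained from $\lambda$ by permuting $\vee$'s and $\wedge$'s; equivalence classes are blocks. A cup diagram consists of finitely many non-crossing cups joining pairs of vertices and rays down to infinity. $c\lambda$ is an oriented cup diagram if free vertices are $\circ/\times$, each cup has one $\vee$ and one $\wedge$ end, ray vertices are $\vee/\wedge$, and no two rays are labelled $\vee,\wedge$ in that order left to right; its degree is its number of clockwise cups (left end labelled $\wedge$). $\underline\lambda$ is the unique cup diagram with $\underline\lambda\lambda$ oriented of degree $0$. $\mu\subset\lambda$ (also written $\lambda\supset\mu$) means $\mu\sim\lambda$ and $\underline\mu\lambda$ is oriented. $\mathrm{def}(\lambda)$ is the number of cups of $\underline\lambda$, and $\mathrm{def}(\Lambda)=\sup_{\lambda\in\Lambda}\mathrm{def}(\lambda)\in\{0,1,2,\dots\}\cup\{\infty\}$. *)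

theory Defs
  imports Main "HOL-Library.Extended_Nat"
begin

text \<open>Labels of vertices: Circ = \<open>\<circ>\<close>, Cross = \<open>\<times>\<close>, Vee = \<open>\<or>\<close>, Wedge = \<open>\<and>\<close>.\<close>
datatype label = Circ | Cross | Vee | Wedge

definition number_line :: "int set \<Rightarrow> bool" where
  "number_line I \<longleftrightarrow> (\<forall>a b c. a \<in> I \<longrightarrow> c \<in> I \<longrightarrow> a \<le> b \<longrightarrow> b \<le> c \<longrightarrow> b \<in> I)"

definition weight :: "int set \<Rightarrow> (int \<Rightarrow> label) \<Rightarrow> bool" where
  "weight I lam \<longleftrightarrow> (\<exists>F. finite F \<and>
     (\<forall>i j. i \<in> I - F \<longrightarrow> j \<in> I - F \<longrightarrow> i < j \<longrightarrow> \<not> (lam i = Vee \<and> lam j = Wedge)))"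

definition wsim :: "int set \<Rightarrow> (int \<Rightarrow> label) \<Rightarrow> (int \<Rightarrow> label) \<Rightarrow> bool" where
  "wsim I lam mu \<longleftrightarrow> weight I lam \<and> weight I mu \<and>
     (\<exists>\<sigma>. bij \<sigma> \<and> finite {i. \<sigma> i \<noteq> i} \<and>
         (\<forall>i. \<sigma> i \<noteq> i \<longrightarrow> i \<in> I \<and> lam i \<in> {Vee, Wedge}) \<and>
         (\<forall>i. mu i = lam (\<sigma> i)))"

text \<open>A cup diagram: a finite set of cups (a,b) with a<b, and a set of ray vertices.\<close>
type_synonym cupdiag = "(int \<times> int) set \<times> int set"

definition cup_ends :: "(int \<times> int) set \<Rightarrow> int set" where
  "cup_ends C = fst ` C \<union> snd ` C"

definition cup_diagram :: "int set \<Rightarrow> cupdiag \<Rightarrow> bool" where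
  "cup_diagram I c \<longleftrightarrow> (let C = fst c; R = snd c in
     finite C \<and>
     (\<forall>(a,b)\<in>C. a \<in> I \<and> b \<in> I \<and> a < b) \<and>
     (\<forall>p\<in>C. \<forall>q\<in>C. p \<noteq> q \<longrightarrow> {fst p, snd p} \<inter> {fst q, snd q} = {}) \<and>
     (\<forall>(a,b)\<in>C. \<forall>(a',b')\<in>C. \<not> (a < a' \<and> a' < b \<and> b < b')) \<and>
     R \<subseteq> I \<and> R \<inter> cup_ends C = {} \<and>
     (\<forall>r\<in>R. \<forall>(a,b)\<in>C. \<not> (a < r \<and> r < b)))"

definition oriented :: "int set \<Rightarrow> cupdiag \<Rightarrow> (int \<Rightarrow> label) \<Rightarrow> bool" where
  "oriented I c lam \<longleftrightarrow> (let C = fst c; R = snd c in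
     (\<forall>i\<in>I. i \<notin> cup_ends C \<longrightarrow> i \<notin> R \<longrightarrow> lam i \<in> {Circ, Cross}) \<and>
     (\<forall>(a,b)\<in>C. (lam a = Vee \<and> lam b = Wedge) \<or> (lam a = Wedge \<and> lam b = Vee)) \<and>
     (\<forall>r\<in>R. lam r \<in> {Vee, Wedge}) \<and>
     (\<forall>r1\<in>R. \<forall>r2\<in>R. r1 < r2 \<longrightarrow> \<not> (lam r1 = Vee \<and> lam r2 = Wedge)))"

text \<open>Degree: number of clockwise cups (left end labelled Wedge).\<close>
definition cdeg :: "cupdiag \<Rightarrow> (int \<Rightarrow> label) \<Rightarrow> nat" where
  "cdeg c lam = card {(a,b) \<in> fst c. lam a = Wedge}"

definition under :: "int set \<Rightarrow> (int \<Rightarrow> label) \<Rightarrow> cupdiag" where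
  "under I lam = (THE c. cup_diagram I c \<and> oriented I c lam \<and> cdeg c lam = 0)"

definition wsub :: "int set \<Rightarrow> (int \<Rightarrow> label) \<Rightarrow> (int \<Rightarrow> label) \<Rightarrow> bool" where
  "wsub I mu lam \<longleftrightarrow> wsim I mu lam \<and> oriented I (under I mu) lam"

definition defect :: "int set \<Rightarrow> (int \<Rightarrow> label) \<Rightarrow> nat" where
  "defect I lam = card (fst (under I lam))"

definition block_defect :: "int set \<Rightarrow> (int \<Rightarrow> label) \<Rightarrow> enat" where
  "block_defect I lam = (SUP mu\<in>{mu. wsim I lam mu}. enat (defect I mu))"

end

theory Submission
  imports Defs "HOL-Combinatorics.Permutations"
begin

text \<open>Reading \<open>\<or>\<close> as an opening and \<open>\<and>\<close> as a closing bracket, the cups of \<open>\<underline>\<lambda>\<close> are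
  exactly the matched bracket pairs and its rays are the unmatched signs, so \<open>\<underline>\<lambda>\<close> exists,
  is unique and has finitely many cups.

  (i) Every \<open>\<mu> \<supset> \<lambda>\<close> arises from \<open>\<lambda>\<close> by reversing the orientation of an arbitrary subset of
  the cups of \<open>\<underline>\<lambda>\<close>: off the cups \<open>\<mu>\<close> agrees with \<open>\<lambda>\<close>, because \<open>\<sim>\<close> preserves the number
  of \<open>\<or>\<close>'s in every large finite window while two orientations of the same rays that differ
  would change that number.

  (iii) A weight \<open>\<mu> \<subset> \<lambda>\<close> is determined by the cups of \<open>\<underline>\<mu>\<close>. Its anticlockwise cups
  (with respect to \<open>\<lambda>\<close>) are \<open>\<or>\<dots>\<and>\<close> pairs of \<open>\<lambda>\<close>, which must touch the finite set where \<open>\<lambda>\<close>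
  violates the ordering, so the defect of \<open>\<mu>\<close> is bounded by its degree plus a constant. A cup of
  a weight of defect at most \<open>N\<close> encloses at most \<open>2N\<close> signs and one of finitely many anchor
  points, hence only finitely many cup sets occur.

  (ii) If \<open>def(\<Lambda>)\<close> is finite this bounds the defect of every \<open>\<mu> \<subset> \<lambda>\<close>. Otherwise \<open>\<lambda>\<close> has
  infinitely many \<open>\<or>\<close>'s and \<open>\<and>\<close>'s, and repeatedly joining the innermost pair of rays
  \<open>\<and>\<dots>\<or>\<close> into a new cup produces weights \<open>\<mu> \<subset> \<lambda>\<close> of arbitrarily large defect.\<close>

section \<open>Cup diagrams and their orientations\<close>

lemma cup_ends_iff: "i \<in> cup_ends C \<longleftrightarrow> (\<exists>b. (i, b) \<in> C) \<or> (\<exists>a. (a, i) \<in> C)"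
  unfolding cup_ends_def by force

lemma cup_ends_mono: "A \<subseteq> C \<Longrightarrow> cup_ends A \<subseteq> cup_ends C"
  unfolding cup_ends_def by auto

lemma finite_cup_ends: "finite C \<Longrightarrow> finite (cup_ends C)"
  unfolding cup_ends_def by simp

lemma cup_ends_insert: "cup_ends (insert (a, b) C) = insert a (insert b (cup_ends C))"
  unfolding cup_ends_def by auto

lemma card_cup_ends_le: "finite C \<Longrightarrow> card (cup_ends C) \<le> 2 * card C"
proof -
  assume "finite C"
  then have "card (cup_ends C) \<le> card C + card C"
    unfolding cup_ends_def by (meson add_mono card_Un_le card_image_le order_trans)
  then show ?thesis by simp
qed

context
  fixes I :: "int set" and c :: cupdiag
  assumes cd: "cup_diagram I c"
begin

lemma cup_diagram_finite: "finite (fst c)"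
  using cd unfolding cup_diagram_def Let_def by blast

lemma cup_diagram_cup: "(a, b) \<in> fst c \<Longrightarrow> a \<in> I \<and> b \<in> I \<and> a < b"
  using cd unfolding cup_diagram_def Let_def by blast

lemma cup_diagram_cups_disjoint:
  assumes "p \<in> fst c" "q \<in> fst c" "p \<noteq> q"
  shows "{fst p, snd p} \<inter> {fst q, snd q} = {}"
proof -
  have "\<forall>p\<in>fst c. \<forall>q\<in>fst c. p \<noteq> q \<longrightarrow> {fst p, snd p} \<inter> {fst q, snd q} = {}"
    using cd unfolding cup_diagram_def Let_def by (elim conjE) assumption
  with assms show ?thesis
    by meson
qed

lemma cup_diagram_cups_eq:
  assumes "(a, b) \<in> fst c" "(a', b') \<in> fst c" "a = a' \<or> a = b' \<or> b = a' \<or> b = b'"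
  shows "a = a' \<and> b = b'"
  using assms cup_diagram_cups_disjoint[of "(a, b)" "(a', b')"] by auto

lemma cup_diagram_noncrossing: "(a, b) \<in> fst c \<Longrightarrow> (a', b') \<in> fst c \<Longrightarrow> a < a' \<Longrightarrow> a' < b \<Longrightarrow> b < b' \<Longrightarrow> False"
  using cd unfolding cup_diagram_def Let_def by blast

lemma cup_diagram_rays: "snd c \<subseteq> I"
  using cd unfolding cup_diagram_def Let_def by blast

lemma cup_diagram_ray_not_end: "r \<in> snd c \<Longrightarrow> r \<notin> cup_ends (fst c)"
  using cd unfolding cup_diagram_def Let_def by blast

lemma cup_diagram_ray_not_nested: "r \<in> snd c \<Longrightarrow> (a, b) \<in> fst c \<Longrightarrow> a < r \<Longrightarrow> r < b \<Longrightarrow> False"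
  using cd unfolding cup_diagram_def Let_def by blast

lemma card_le_card_partners:
  assumes "finite B" "\<And>i. i \<in> A \<Longrightarrow> \<exists>j\<in>B. (i, j) \<in> fst c \<or> (j, i) \<in> fst c"
  shows "card A \<le> card B"
proof -
  have "\<forall>i\<in>A. \<exists>j. j \<in> B \<and> ((i, j) \<in> fst c \<or> (j, i) \<in> fst c)"
    using assms(2) by blast
  then obtain f where f: "\<And>i. i \<in> A \<Longrightarrow> f i \<in> B \<and> ((i, f i) \<in> fst c \<or> (f i, i) \<in> fst c)"
    by metis
  have "inj_on f A"
  proof (rule inj_onI)
    fix i i' assume "i \<in> A" "i' \<in> A" "f i = f i'"
    then show "i = i'"
      using f[of i] f[of i'] cup_diagram_cups_eq[of i "f i" i' "f i'"] cup_diagram_cups_eq[of i "f i" "f i'" i']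
        cup_diagram_cups_eq[of "f i" i i' "f i'"] cup_diagram_cups_eq[of "f i" i "f i'" i'] by auto
  qed
  with f show ?thesis
    by (intro card_inj_on_le[OF _ _ assms(1)]) auto
qed

lemma inj_on_cup_end_selector:
  assumes "D \<subseteq> fst c" "\<And>p. p \<in> D \<Longrightarrow> h p = fst p \<or> h p = snd p"
  shows "inj_on h D"
proof (rule inj_onI)
  fix p q assume pq: "p \<in> D" "q \<in> D" "h p = h q"
  show "p = q"
  proof (rule ccontr)
    assume "p \<noteq> q"
    with pq assms(1) have "{fst p, snd p} \<inter> {fst q, snd q} = {}"
      by (intro cup_diagram_cups_disjoint) auto
    moreover have "h p \<in> {fst p, snd p}" "h p \<in> {fst q, snd q}"
      using assms(2)[of p] assms(2)[of q] pq by auto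
    ultimately show False
      by auto
  qed
qed

lemma card_cups_le:
  assumes "D \<subseteq> fst c" "finite B" "\<And>a b. (a, b) \<in> D \<Longrightarrow> a \<in> B \<or> b \<in> B"
  shows "card D \<le> card B"
proof -
  let ?h = "\<lambda>p. if fst p \<in> B then fst p else snd p"
  have "inj_on ?h D"
    by (rule inj_on_cup_end_selector[OF assms(1)]) auto
  moreover have "?h ` D \<subseteq> B"
  proof
    fix x assume "x \<in> ?h ` D"
    then obtain a b where "(a, b) \<in> D" "x = ?h (a, b)"
      by auto
    with assms(3)[of a b] show "x \<in> B"
      by auto
  qed
  ultimately show ?thesis
    by (rule card_inj_on_le[OF _ _ assms(2)])
qed

end

context
  fixes I :: "int set" and c :: cupdiag and lam :: "int \<Rightarrow> label"
  assumes or: "oriented I c lam"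
begin

lemma oriented_free: "i \<in> I \<Longrightarrow> i \<notin> cup_ends (fst c) \<Longrightarrow> i \<notin> snd c \<Longrightarrow> lam i = Circ \<or> lam i = Cross"
  using or unfolding oriented_def Let_def by blast

lemma oriented_cup:
  "(a, b) \<in> fst c \<Longrightarrow> (lam a = Vee \<and> lam b = Wedge) \<or> (lam a = Wedge \<and> lam b = Vee)"
  using or unfolding oriented_def Let_def by blast

lemma oriented_ray: "r \<in> snd c \<Longrightarrow> lam r = Vee \<or> lam r = Wedge"
  using or unfolding oriented_def Let_def by blast

lemma oriented_rays_ordered:
  assumes "r1 \<in> snd c" "r2 \<in> snd c" "lam r1 = Vee" "lam r2 = Wedge"
  shows "r2 < r1"
proof (rule ccontr)
  assume "\<not> r2 < r1"
  with assms(3,4) have "r1 < r2"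
    by (metis label.distinct(11) linorder_neqE)
  with assms or show False
    unfolding oriented_def Let_def by blast
qed

end

lemma orientedI:
  assumes "\<And>i. i \<in> I \<Longrightarrow> i \<notin> cup_ends C \<Longrightarrow> i \<notin> R \<Longrightarrow> lam i = Circ \<or> lam i = Cross"
    and "\<And>a b. (a, b) \<in> C \<Longrightarrow> (lam a = Vee \<and> lam b = Wedge) \<or> (lam a = Wedge \<and> lam b = Vee)"
    and "\<And>r. r \<in> R \<Longrightarrow> lam r = Vee \<or> lam r = Wedge"
    and "\<And>r1 r2. r1 \<in> R \<Longrightarrow> r2 \<in> R \<Longrightarrow> lam r1 = Vee \<Longrightarrow> lam r2 = Wedge \<Longrightarrow> r2 < r1"
  shows "oriented I (C, R) lam"
proof -
  have "\<forall>(a, b)\<in>C. (lam a = Vee \<and> lam b = Wedge) \<or> (lam a = Wedge \<and> lam b = Vee)"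
    using assms(2) by blast
  moreover have "\<forall>r1\<in>R. \<forall>r2\<in>R. r1 < r2 \<longrightarrow> \<not> (lam r1 = Vee \<and> lam r2 = Wedge)"
    using assms(4) by (meson not_less_iff_gr_or_eq)
  ultimately show ?thesis
    unfolding oriented_def Let_def fst_conv snd_conv using assms(1,3) by blast
qed

lemma cup_diagramI:
  assumes "finite C" "\<And>a b. (a, b) \<in> C \<Longrightarrow> a \<in> I \<and> b \<in> I \<and> a < b"
    and "\<And>a b a' b'. (a, b) \<in> C \<Longrightarrow> (a', b') \<in> C \<Longrightarrow> a = a' \<or> a = b' \<or> b = a' \<or> b = b'
           \<Longrightarrow> a = a' \<and> b = b'"
    and "\<And>a b a' b'. (a, b) \<in> C \<Longrightarrow> (a', b') \<in> C \<Longrightarrow> a < a' \<Longrightarrow> a' < b \<Longrightarrow> b < b' \<Longrightarrow> False"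
    and "R \<subseteq> I" "\<And>r. r \<in> R \<Longrightarrow> r \<notin> cup_ends C"
    and "\<And>r a b. r \<in> R \<Longrightarrow> (a, b) \<in> C \<Longrightarrow> a < r \<Longrightarrow> r < b \<Longrightarrow> False"
  shows "cup_diagram I (C, R)"
proof -
  have "\<forall>(a, b)\<in>C. a \<in> I \<and> b \<in> I \<and> a < b"
    using assms(2) by blast
  moreover have "\<forall>p\<in>C. \<forall>q\<in>C. p \<noteq> q \<longrightarrow> {fst p, snd p} \<inter> {fst q, snd q} = {}"
  proof (intro ballI impI)
    fix p q assume pq: "p \<in> C" "q \<in> C" "p \<noteq> q"
    obtain a b a' b' where p: "p = (a, b)" and q: "q = (a', b')"
      by fastforce
    have "\<not> (a = a' \<or> a = b' \<or> b = a' \<or> b = b')"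
    proof
      assume "a = a' \<or> a = b' \<or> b = a' \<or> b = b'"
      with assms(3)[of a b a' b'] pq(1,2) p q have "p = q"
        by simp
      with pq(3) show False ..
    qed
    with p q show "{fst p, snd p} \<inter> {fst q, snd q} = {}"
      by auto
  qed
  moreover have "\<forall>(a, b)\<in>C. \<forall>(a', b')\<in>C. \<not> (a < a' \<and> a' < b \<and> b < b')"
    using assms(4) by fast
  moreover have "R \<inter> cup_ends C = {}"
    using assms(6) by auto
  moreover have "\<forall>r\<in>R. \<forall>(a, b)\<in>C. \<not> (a < r \<and> r < b)"
    using assms(7) by fast
  ultimately show ?thesis
    using assms(1,5) unfolding cup_diagram_def Let_def fst_conv snd_conv by (intro conjI) assumption+
qed

lemma card_cup_ends_Vee:
  assumes cd: "cup_diagram I c" and or: "oriented I c lam"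
  shows "card {i \<in> cup_ends (fst c). lam i = Vee} = card (fst c)"
proof -
  let ?h = "\<lambda>p. if lam (fst p) = Vee then fst p else snd p"
  have "bij_betw ?h (fst c) {i \<in> cup_ends (fst c). lam i = Vee}"
  proof (rule bij_betw_imageI)
    show "inj_on ?h (fst c)"
      by (rule inj_on_cup_end_selector[OF cd subset_refl]) auto
    show "?h ` fst c = {i \<in> cup_ends (fst c). lam i = Vee}"
    proof
      show "?h ` fst c \<subseteq> {i \<in> cup_ends (fst c). lam i = Vee}"
      proof
        fix x assume "x \<in> ?h ` fst c"
        then obtain a b where ab: "(a, b) \<in> fst c" "x = ?h (a, b)"
          by auto
        then show "x \<in> {i \<in> cup_ends (fst c). lam i = Vee}"
          using oriented_cup[OF or ab(1)] unfolding cup_ends_iff by auto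
      qed
      show "{i \<in> cup_ends (fst c). lam i = Vee} \<subseteq> ?h ` fst c"
      proof
        fix i assume i: "i \<in> {i \<in> cup_ends (fst c). lam i = Vee}"
        then consider b where "(i, b) \<in> fst c" | a where "(a, i) \<in> fst c"
          unfolding cup_ends_iff by blast
        then show "i \<in> ?h ` fst c"
        proof cases
          case (1 b)
          with i show ?thesis
            by (intro image_eqI[of _ _ "(i, b)"]) auto
        next
          case (2 a)
          with i oriented_cup[OF or 2] show ?thesis
            by (intro image_eqI[of _ _ "(a, i)"]) auto
        qed
      qed
    qed
  qed
  then show ?thesis
    by (simp add: bij_betw_same_card)
qed

definition is_under :: "int set \<Rightarrow> (int \<Rightarrow> label) \<Rightarrow> cupdiag \<Rightarrow> bool" where
  "is_under I lam c \<longleftrightarrow> cup_diagram I c \<and> oriented I c lam \<and> cdeg c lam = 0"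

lemma cdeg_eq_0_iff:
  assumes "finite (fst c)"
  shows "cdeg c lam = 0 \<longleftrightarrow> (\<forall>(a, b) \<in> fst c. lam a \<noteq> Wedge)"
proof -
  have "finite {(a, b) \<in> fst c. lam a = Wedge}"
    by (rule finite_subset[OF _ assms]) auto
  then show ?thesis
    unfolding cdeg_def by auto
qed

lemma is_under_cup:
  assumes "is_under I lam c" "(a, b) \<in> fst c"
  shows "lam a = Vee \<and> lam b = Wedge"
proof -
  from assms(1) have "cup_diagram I c" "oriented I c lam" "cdeg c lam = 0"
    unfolding is_under_def by auto
  then have "lam a \<noteq> Wedge"
    using assms(2) cdeg_eq_0_iff[OF cup_diagram_finite] by fastforce
  then show ?thesis
    using oriented_cup[OF \<open>oriented I c lam\<close> assms(2)] by auto
qed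

section \<open>The cup diagram of a weight\<close>

definition sign_vertices :: "int set \<Rightarrow> (int \<Rightarrow> label) \<Rightarrow> int set" where
  "sign_vertices I lam = {i \<in> I. lam i = Vee \<or> lam i = Wedge}"

definition height_step :: "int set \<Rightarrow> (int \<Rightarrow> label) \<Rightarrow> int \<Rightarrow> int" where
  "height_step I lam i =
     (if i \<in> I \<and> lam i = Vee then 1 else if i \<in> I \<and> lam i = Wedge then -1 else 0)"

definition height :: "int set \<Rightarrow> (int \<Rightarrow> label) \<Rightarrow> int \<Rightarrow> int \<Rightarrow> int" where
  "height I lam x y = (\<Sum>i\<in>{x..<y}. height_step I lam i)"

lemma height_split: "x \<le> y \<Longrightarrow> y \<le> z \<Longrightarrow> height I lam x z = height I lam x y + height I lam y z"
  unfolding height_def by (simp add: sum.union_disjoint[symmetric] ivl_disj_un_two(3))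

lemma height_singleton [simp]: "height I lam x (x + 1) = height_step I lam x"
proof -
  have "{x..<x + 1} = {x}"
    by auto
  then show ?thesis
    unfolding height_def by simp
qed

lemma height_step_Vee: "i \<in> I \<Longrightarrow> lam i = Vee \<Longrightarrow> height_step I lam i = 1"
  and height_step_Wedge: "i \<in> I \<Longrightarrow> lam i = Wedge \<Longrightarrow> height_step I lam i = -1"
  unfolding height_step_def by auto

lemma height_step_bounds: "-1 \<le> height_step I lam i" "height_step I lam i \<le> 1"
  unfolding height_step_def by auto

lemma height_eq_card_diff:
  "height I lam x y = int (card {i \<in> {x..<y}. i \<in> I \<and> lam i = Vee}) - int (card {i \<in> {x..<y}. i \<in> I \<and> lam i = Wedge})"
proof -
  have "height_step I lam i = of_bool (i \<in> I \<and> lam i = Vee) - of_bool (i \<in> I \<and> lam i = Wedge)" for i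
    unfolding height_step_def by auto
  then show ?thesis
    unfolding height_def by (simp add: sum_subtractf Int_def conj_commute)
qed

text \<open>With \<open>\<or>\<close> as opening and \<open>\<and>\<close> as closing bracket, \<open>matched I lam a b\<close> says that the bracket
  opened at \<open>a\<close> is closed at \<open>b\<close>.\<close>

definition matched :: "int set \<Rightarrow> (int \<Rightarrow> label) \<Rightarrow> int \<Rightarrow> int \<Rightarrow> bool" where
  "matched I lam a b \<longleftrightarrow>
     a < b \<and> height I lam a (b + 1) = 0 \<and> (\<forall>x. a < x \<and> x \<le> b \<longrightarrow> 0 < height I lam a x)"

lemma matched_ends:
  assumes "matched I lam a b"
  shows "a \<in> I" "lam a = Vee" "b \<in> I" "lam b = Wedge" "a < b"
proof -
  have ab: "a < b" and zero: "height I lam a (b + 1) = 0"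
    and pos: "\<And>x. a < x \<Longrightarrow> x \<le> b \<Longrightarrow> 0 < height I lam a x"
    using assms unfolding matched_def by auto
  have "0 < height_step I lam a"
    using pos[of "a + 1"] ab by simp
  then show "a \<in> I" "lam a = Vee"
    unfolding height_step_def by (auto split: if_splits)
  have "height I lam a (b + 1) = height I lam a b + height_step I lam b"
    using height_split[of a b "b + 1"] ab by simp
  then have "height_step I lam b < 0"
    using zero pos[of b] ab by simp
  then show "b \<in> I" "lam b = Wedge"
    unfolding height_step_def by (auto split: if_splits)
  show "a < b" by (fact ab)
qed

lemma matched_right_unique:
  assumes "matched I lam a b" "matched I lam a b'"
  shows "b = b'"
proof -
  have *: "False" if "matched I lam a b" "matched I lam a b'" "b < b'" for b b'
  proof -
    have "a < b + 1 \<and> b + 1 \<le> b'"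
      using that unfolding matched_def by auto
    then have "0 < height I lam a (b + 1)"
      using that(2) unfolding matched_def by blast
    with that(1) show False
      unfolding matched_def by simp
  qed
  from linorder_less_linear[of b b'] show ?thesis
    using *[OF assms] *[OF assms(2,1)] by blast
qed

lemma matched_left_unique:
  assumes "matched I lam a b" "matched I lam a' b"
  shows "a = a'"
proof -
  have *: "False" if "matched I lam a b" "matched I lam a' b" "a < a'" for a a'
  proof -
    have "0 < height I lam a a'" "a' < b + 1"
      using that unfolding matched_def by auto
    moreover have "height I lam a (b + 1) = height I lam a a' + height I lam a' (b + 1)"
      using height_split[of a a' "b + 1"] that(3) calculation(2) by simp
    ultimately show False
      using that(1,2) unfolding matched_def by simp
  qed
  from linorder_less_linear[of a a'] show ?thesis
    using *[OF assms] *[OF assms(2,1)] by blast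
qed

lemma matched_share_end:
  assumes "matched I lam a b" "matched I lam a' b'" "a = a' \<or> a = b' \<or> b = a' \<or> b = b'"
  shows "a = a' \<and> b = b'"
  using assms(3)
proof (elim disjE)
  assume "a = a'"
  then show ?thesis
    using matched_right_unique assms(1,2) by blast
next
  assume "b = b'"
  then show ?thesis
    using matched_left_unique assms(1,2) by blast
qed (use matched_ends[OF assms(1)] matched_ends[OF assms(2)] in simp_all)

lemma matched_noncrossing:
  assumes "matched I lam a b" "matched I lam a' b'" "a < a'" "a' < b" "b < b'"
  shows False
proof -
  have "0 < height I lam a a'" "0 < height I lam a' (b + 1)"
    using assms unfolding matched_def by auto
  moreover have "height I lam a (b + 1) = height I lam a a' + height I lam a' (b + 1)"
    using height_split[of a a' "b + 1"] assms(3,4) by simp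
  ultimately show False
    using assms(1) unfolding matched_def by simp
qed

text \<open>The partner is the first point where the height returns to its starting level.\<close>

lemma matched_right_exists:
  assumes step: "height_step I lam i = 1" and "i < y" and "height I lam i y \<le> 0"
  obtains b where "matched I lam i b" "b < y"
proof -
  define S where "S = {z. i < z \<and> z \<le> y \<and> height I lam i z \<le> 0}"
  have "finite S" "y \<in> S"
    using assms unfolding S_def by (auto intro: finite_subset[of _ "{i..y}"])
  define z where "z = Min S"
  have zS: "z \<in> S"
    unfolding z_def using \<open>finite S\<close> \<open>y \<in> S\<close> by (intro Min_in) auto
  have z_min: "\<And>z'. z' \<in> S \<Longrightarrow> z \<le> z'"
    unfolding z_def using \<open>finite S\<close> by simp
  have pos: "0 < height I lam i x" if "i < x" "x < z" for x
    using z_min[of x] that zS unfolding S_def by force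
  have "z \<noteq> i + 1"
    using zS step unfolding S_def by auto
  with zS have "i + 1 < z"
    unfolding S_def by auto
  moreover have "height I lam i z = height I lam i (z - 1) + height_step I lam (z - 1)"
    using height_split[of i "z - 1" z] height_singleton[of I lam "z - 1"] calculation by simp
  ultimately have "height I lam i z = 0"
    using zS pos[of "z - 1"] height_step_bounds[of I lam "z - 1"] unfolding S_def by auto
  with pos \<open>i + 1 < z\<close> have "matched I lam i (z - 1)"
    unfolding matched_def by auto
  moreover have "z - 1 < y"
    using zS unfolding S_def by auto
  ultimately show thesis
    by (rule that)
qed

lemma matched_left_exists:
  assumes step: "height_step I lam i = -1" and "z \<le> i" and "0 \<le> height I lam z (i + 1)"
  obtains a where "matched I lam a i" "z \<le> a"
proof -
  define S where "S = {x. z \<le> x \<and> x \<le> i \<and> 0 \<le> height I lam x (i + 1)}"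
  have "finite S" "z \<in> S"
    using assms unfolding S_def by (auto intro: finite_subset[of _ "{z..i}"])
  define a where "a = Max S"
  have aS: "a \<in> S"
    unfolding a_def using \<open>finite S\<close> \<open>z \<in> S\<close> by (intro Max_in) auto
  have a_max: "\<And>x. x \<in> S \<Longrightarrow> x \<le> a"
    unfolding a_def using \<open>finite S\<close> by simp
  have neg: "height I lam x (i + 1) < 0" if "a < x" "x \<le> i" for x
    using a_max[of x] that aS unfolding S_def by force
  have "a \<noteq> i"
    using aS step unfolding S_def by auto
  with aS have "a < i"
    unfolding S_def by auto
  moreover have "height I lam a (i + 1) = height_step I lam a + height I lam (a + 1) (i + 1)"
    using height_split[of a "a + 1" "i + 1"] calculation by simp
  ultimately have zero: "height I lam a (i + 1) = 0"
    using aS neg[of "a + 1"] height_step_bounds[of I lam a] unfolding S_def by auto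
  have "0 < height I lam a x" if "a < x" "x \<le> i" for x
    using height_split[of a x "i + 1"] neg[OF that] zero that by simp
  with zero \<open>a < i\<close> have "matched I lam a i"
    unfolding matched_def by auto
  moreover have "z \<le> a"
    using aS unfolding S_def by auto
  ultimately show thesis
    by (rule that)
qed

definition matching :: "int set \<Rightarrow> (int \<Rightarrow> label) \<Rightarrow> (int \<times> int) set" where
  "matching I lam = {(a, b). matched I lam a b}"

lemma cup_ends_matching:
  "i \<in> cup_ends (matching I lam) \<longleftrightarrow> (\<exists>b. matched I lam i b) \<or> (\<exists>a. matched I lam a i)"
  unfolding matching_def cup_ends_iff by simp

lemma matched_nested:
  assumes m: "matched I lam a b" and i: "i \<in> sign_vertices I lam" "a < i" "i < b"
  shows "i \<in> cup_ends (matching I lam)"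
proof (cases "lam i = Vee")
  case True
  with i have step: "height_step I lam i = 1"
    unfolding sign_vertices_def height_step_def by auto
  have "height I lam a (b + 1) = height I lam a i + height I lam i (b + 1)"
    using height_split[of a i "b + 1"] i by simp
  moreover have "0 < height I lam a i" "height I lam a (b + 1) = 0"
    using m i unfolding matched_def by auto
  ultimately obtain b' where "matched I lam i b'"
    using matched_right_exists[OF step, of "b + 1"] i by force
  then show ?thesis
    unfolding cup_ends_matching by blast
next
  case False
  with i have step: "height_step I lam i = -1"
    unfolding sign_vertices_def height_step_def by auto
  have "0 < height I lam a (i + 1)"
    using m i unfolding matched_def by auto
  then obtain a' where "matched I lam a' i"
    using matched_left_exists[OF step, of a] i by force
  then show ?thesis
    unfolding cup_ends_matching by blast
qed

lemma unmatched_signs_ordered: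
  assumes "r1 \<in> I" "lam r1 = Vee" "r1 \<notin> cup_ends (matching I lam)"
    and "r2 \<in> I" "lam r2 = Wedge" "r2 \<notin> cup_ends (matching I lam)"
  shows "r2 < r1"
proof (rule ccontr)
  assume "\<not> r2 < r1"
  with assms(2,5) have "r1 < r2"
    by (metis label.distinct(11) linorder_neqE)
  show False
  proof (cases "height I lam r1 (r2 + 1) \<le> 0")
    case True
    then obtain b where "matched I lam r1 b"
      using matched_right_exists[OF height_step_Vee[of r1 I lam, OF assms(1,2)], of "r2 + 1"] \<open>r1 < r2\<close> by auto
    with assms(3) show False
      unfolding cup_ends_matching by blast
  next
    case False
    then obtain a where "matched I lam a r2"
      using matched_left_exists[OF height_step_Wedge[of r2 I lam, OF assms(4,5)], of r1] \<open>r1 < r2\<close> by auto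
    with assms(6) show False
      unfolding cup_ends_matching by blast
  qed
qed

lemma finite_if_subsingleton:
  assumes "\<And>x y. x \<in> A \<Longrightarrow> y \<in> A \<Longrightarrow> x = y"
  shows "finite A"
proof (cases "A = {}")
  case False
  then obtain x where "x \<in> A"
    by auto
  with assms have "A = {x}"
    by auto
  then show ?thesis
    by simp
qed simp

definition weight_exceptions :: "int set \<Rightarrow> (int \<Rightarrow> label) \<Rightarrow> int set \<Rightarrow> bool" where
  "weight_exceptions I lam F \<longleftrightarrow> finite F \<and>
     (\<forall>i\<in>I. \<forall>j\<in>I. i < j \<longrightarrow> lam i = Vee \<longrightarrow> lam j = Wedge \<longrightarrow> i \<in> F \<or> j \<in> F)"

lemma weight_exceptions_exist:
  assumes "weight I lam"
  obtains F where "weight_exceptions I lam F"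
proof -
  from assms obtain F where "finite F"
    and F: "\<forall>i j. i \<in> I - F \<longrightarrow> j \<in> I - F \<longrightarrow> i < j \<longrightarrow> \<not> (lam i = Vee \<and> lam j = Wedge)"
    unfolding weight_def by blast
  then have "weight_exceptions I lam F"
    unfolding weight_exceptions_def by auto
  then show thesis
    by (rule that)
qed

lemma finite_matching:
  assumes "weight I lam"
  shows "finite (matching I lam)"
proof -
  obtain F where F: "weight_exceptions I lam F"
    using weight_exceptions_exist[OF assms] .
  have "finite {b. matched I lam a b}" "finite {a. matched I lam a b}" for a b
    using matched_right_unique matched_left_unique by (auto intro: finite_if_subsingleton)
  with F have "finite ((\<Union>a\<in>F. {a} \<times> {b. matched I lam a b}) \<union> (\<Union>b\<in>F. {a. matched I lam a b} \<times> {b}))"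
    unfolding weight_exceptions_def by auto
  moreover have "matching I lam \<subseteq> (\<Union>a\<in>F. {a} \<times> {b. matched I lam a b}) \<union> (\<Union>b\<in>F. {a. matched I lam a b} \<times> {b})"
  proof
    fix p assume "p \<in> matching I lam"
    then obtain a b where p: "p = (a, b)" "matched I lam a b"
      unfolding matching_def by auto
    then have "a \<in> F \<or> b \<in> F"
      using F matched_ends[OF p(2)] unfolding weight_exceptions_def by simp
    with p show "p \<in> (\<Union>a\<in>F. {a} \<times> {b. matched I lam a b}) \<union> (\<Union>b\<in>F. {a. matched I lam a b} \<times> {b})"
      by auto
  qed
  ultimately show ?thesis
    by (rule finite_subset[rotated])
qed

definition canonical_diagram :: "int set \<Rightarrow> (int \<Rightarrow> label) \<Rightarrow> cupdiag" where
  "canonical_diagram I lam = (matching I lam, sign_vertices I lam - cup_ends (matching I lam))"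

lemma cup_diagram_canonical:
  assumes "weight I lam"
  shows "cup_diagram I (canonical_diagram I lam)"
  unfolding canonical_diagram_def
proof (rule cup_diagramI)
  show "finite (matching I lam)"
    using finite_matching[OF assms] .
  show "a \<in> I \<and> b \<in> I \<and> a < b" if "(a, b) \<in> matching I lam" for a b
    using that matched_ends(1,3,5)[of I lam a b] unfolding matching_def by blast
  show "a = a' \<and> b = b'"
    if "(a, b) \<in> matching I lam" "(a', b') \<in> matching I lam" "a = a' \<or> a = b' \<or> b = a' \<or> b = b'" for a b a' b'
    using that matched_share_end[of I lam a b a' b'] unfolding matching_def by blast
  show False if "(a, b) \<in> matching I lam" "(a', b') \<in> matching I lam" "a < a'" "a' < b" "b < b'"
    for a b a' b'
    using that matched_noncrossing[of I lam a b a' b'] unfolding matching_def by simp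
  show "sign_vertices I lam - cup_ends (matching I lam) \<subseteq> I"
    unfolding sign_vertices_def by auto
  show "r \<notin> cup_ends (matching I lam)" if "r \<in> sign_vertices I lam - cup_ends (matching I lam)" for r
    using that by simp
  show False if "r \<in> sign_vertices I lam - cup_ends (matching I lam)" "(a, b) \<in> matching I lam" "a < r" "r < b"
    for r a b
    using that matched_nested[of I lam a b r] unfolding matching_def by simp
qed

lemma oriented_canonical: "oriented I (canonical_diagram I lam) lam"
  unfolding canonical_diagram_def
proof (rule orientedI)
  show "lam i = Circ \<or> lam i = Cross"
    if "i \<in> I" "i \<notin> cup_ends (matching I lam)" "i \<notin> sign_vertices I lam - cup_ends (matching I lam)" for i
    using that by (cases "lam i") (auto simp: sign_vertices_def)
  show "(lam a = Vee \<and> lam b = Wedge) \<or> (lam a = Wedge \<and> lam b = Vee)" if "(a, b) \<in> matching I lam" for a b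
    using that matched_ends(2,4)[of I lam a b] unfolding matching_def by blast
  show "lam r = Vee \<or> lam r = Wedge" if "r \<in> sign_vertices I lam - cup_ends (matching I lam)" for r
    using that unfolding sign_vertices_def by simp
  show "r2 < r1"
    if "r1 \<in> sign_vertices I lam - cup_ends (matching I lam)" "r2 \<in> sign_vertices I lam - cup_ends (matching I lam)"
      "lam r1 = Vee" "lam r2 = Wedge" for r1 r2
    using that unmatched_signs_ordered[of r1 I lam r2] unfolding sign_vertices_def by simp
qed

lemma is_under_canonical:
  assumes "weight I lam"
  shows "is_under I lam (canonical_diagram I lam)"
proof -
  have "\<forall>(a, b) \<in> matching I lam. lam a \<noteq> Wedge"
    using matched_ends unfolding matching_def by fastforce
  then have "cdeg (canonical_diagram I lam) lam = 0"
    using cdeg_eq_0_iff[of "canonical_diagram I lam" lam] finite_matching[OF assms]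
    unfolding canonical_diagram_def by simp
  with cup_diagram_canonical[OF assms] oriented_canonical show ?thesis
    unfolding is_under_def by blast
qed

lemma is_under_rays:
  assumes "is_under I lam c"
  shows "snd c = sign_vertices I lam - cup_ends (fst c)"
proof -
  have cd: "cup_diagram I c" and or: "oriented I c lam"
    using assms unfolding is_under_def by auto
  have "snd c \<subseteq> sign_vertices I lam - cup_ends (fst c)"
    using cup_diagram_rays[OF cd] cup_diagram_ray_not_end[OF cd] oriented_ray[OF or]
    unfolding sign_vertices_def by blast
  moreover have "sign_vertices I lam - cup_ends (fst c) \<subseteq> snd c"
    using oriented_free[OF or] unfolding sign_vertices_def by fastforce
  ultimately show ?thesis
    by (rule subset_antisym)
qed

lemma is_under_inner_partner:
  assumes u: "is_under I lam c" and ab: "(a, b) \<in> fst c"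
    and i: "i \<in> sign_vertices I lam" "a < i" "i < b"
  obtains j where "a < j" "j < b" "(i, j) \<in> fst c \<or> (j, i) \<in> fst c"
proof -
  have cd: "cup_diagram I c"
    using u unfolding is_under_def by auto
  have "i \<notin> snd c"
    using cup_diagram_ray_not_nested[OF cd _ ab] i by blast
  then have "i \<in> cup_ends (fst c)"
    using is_under_rays[OF u] i by blast
  then consider j where "(i, j) \<in> fst c" | j where "(j, i) \<in> fst c"
    unfolding cup_ends_iff by blast
  then show thesis
  proof cases
    case (1 j)
    have "j \<noteq> b"
      using cup_diagram_cups_eq[OF cd 1 ab] i by auto
    moreover have "\<not> b < j"
      using cup_diagram_noncrossing[OF cd ab 1] i by auto
    ultimately show thesis
      using that[of j] 1 cup_diagram_cup[OF cd 1] i by auto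
  next
    case (2 j)
    have "j \<noteq> a"
      using cup_diagram_cups_eq[OF cd 2 ab] i by auto
    moreover have "\<not> j < a"
      using cup_diagram_noncrossing[OF cd 2 ab] i by auto
    ultimately show thesis
      using that[of j] 2 cup_diagram_cup[OF cd 2] i by auto
  qed
qed

text \<open>Inside a cup of a degree-zero diagram the cups pair \<open>\<or>\<close>'s with later \<open>\<and>\<close>'s, so the
  height stays positive and returns to zero exactly after the right end.\<close>

lemma is_under_cup_matched:
  assumes u: "is_under I lam c" and ab: "(a, b) \<in> fst c"
  shows "matched I lam a b"
proof -
  have cd: "cup_diagram I c"
    using u unfolding is_under_def by auto
  have abI: "a \<in> I" "b \<in> I" "a < b" and lab: "lam a = Vee" "lam b = Wedge"
    using cup_diagram_cup[OF cd ab] is_under_cup[OF u ab] by auto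
  let ?V = "\<lambda>x. {i \<in> {a + 1..<x}. i \<in> I \<and> lam i = Vee}"
  let ?W = "\<lambda>x. {i \<in> {a + 1..<x}. i \<in> I \<and> lam i = Wedge}"
  have W_le_V: "card (?W x) \<le> card (?V x)" if xb: "x \<le> b" for x
  proof (rule card_le_card_partners[OF cd])
    fix i assume i: "i \<in> ?W x"
    then obtain j where j: "a < j" "(i, j) \<in> fst c \<or> (j, i) \<in> fst c"
      using is_under_inner_partner[OF u ab, of i] xb unfolding sign_vertices_def by auto
    then have "(j, i) \<in> fst c"
      using is_under_cup[OF u, of i j] i by auto
    then show "\<exists>j\<in>?V x. (i, j) \<in> fst c \<or> (j, i) \<in> fst c"
      using j(1) i cup_diagram_cup[OF cd, of j i] is_under_cup[OF u, of j i] by (intro bexI[of _ j]) auto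
  qed (rule finite_subset[of _ "{a + 1..<x}"], auto)
  have V_le_W: "card (?V b) \<le> card (?W b)"
  proof (rule card_le_card_partners[OF cd])
    fix i assume i: "i \<in> ?V b"
    then obtain j where j: "j < b" "(i, j) \<in> fst c \<or> (j, i) \<in> fst c"
      using is_under_inner_partner[OF u ab, of i] unfolding sign_vertices_def by auto
    then have "(i, j) \<in> fst c"
      using is_under_cup[OF u, of j i] i by auto
    then show "\<exists>j\<in>?W b. (i, j) \<in> fst c \<or> (j, i) \<in> fst c"
      using j(1) i cup_diagram_cup[OF cd, of i j] is_under_cup[OF u, of i j] by (intro bexI[of _ j]) auto
  qed (rule finite_subset[of _ "{a + 1..<b}"], auto)
  have height_a: "height I lam a x = 1 + (int (card (?V x)) - int (card (?W x)))" if "a < x" for x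
    using height_split[of a "a + 1" x I lam] height_eq_card_diff[of I lam "a + 1" x] that
      height_step_Vee[of a I lam] abI(1) lab(1) by simp
  have "0 < height I lam a x" if "a < x" "x \<le> b" for x
    using height_a[OF that(1)] W_le_V[OF that(2)] by simp
  moreover have "height I lam a (b + 1) = height I lam a b + height_step I lam b"
    using height_split[of a b "b + 1" I lam] abI by simp
  then have "height I lam a (b + 1) = 0"
    using height_a[of b] W_le_V[of b] V_le_W abI height_step_Wedge[of b I lam] lab(2) by simp
  ultimately show ?thesis
    using abI unfolding matched_def by auto
qed

lemma matched_is_under_cup:
  assumes u: "is_under I lam c" and m: "matched I lam a b"
  shows "(a, b) \<in> fst c"
proof -
  have or: "oriented I c lam"
    using u unfolding is_under_def by auto
  note ends = matched_ends[OF m]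
  have a_left: "(a, b) \<in> fst c" if "a \<in> cup_ends (fst c)"
  proof -
    from that consider e where "(a, e) \<in> fst c" | e where "(e, a) \<in> fst c"
      unfolding cup_ends_iff by blast
    then show ?thesis
    proof cases
      case (1 e)
      then show ?thesis
        using matched_right_unique[OF m is_under_cup_matched[OF u 1]] by simp
    qed (use is_under_cup[OF u] ends in auto)
  qed
  have b_right: "(a, b) \<in> fst c" if "b \<in> cup_ends (fst c)"
  proof -
    from that consider e where "(b, e) \<in> fst c" | e where "(e, b) \<in> fst c"
      unfolding cup_ends_iff by blast
    then show ?thesis
    proof cases
      case (2 e)
      then show ?thesis
        using matched_left_unique[OF m is_under_cup_matched[OF u 2]] by simp
    qed (use is_under_cup[OF u] ends in auto)
  qed
  have False if "a \<notin> cup_ends (fst c)" "b \<notin> cup_ends (fst c)"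
  proof -
    have "a \<in> snd c" "b \<in> snd c"
      using that ends is_under_rays[OF u] unfolding sign_vertices_def by auto
    then show False
      using oriented_rays_ordered[OF or] ends by fastforce
  qed
  then show ?thesis
    using a_left b_right by blast
qed

lemma is_under_eq_canonical:
  assumes "is_under I lam c"
  shows "c = canonical_diagram I lam"
proof -
  have "fst c = matching I lam"
    using is_under_cup_matched[OF assms] matched_is_under_cup[OF assms]
    unfolding matching_def by auto
  with is_under_rays[OF assms] show ?thesis
    unfolding canonical_diagram_def by (simp add: prod_eq_iff)
qed

lemma under_eq_canonical:
  assumes "weight I lam"
  shows "under I lam = canonical_diagram I lam"
  unfolding under_def is_under_def[symmetric]
  using is_under_canonical[OF assms] is_under_eq_canonical by (rule the_equality)

lemma is_under_under: "weight I lam \<Longrightarrow> is_under I lam (under I lam)"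
  using under_eq_canonical is_under_canonical by simp

lemma under_eqI: "weight I lam \<Longrightarrow> is_under I lam c \<Longrightarrow> under I lam = c"
  using under_eq_canonical is_under_eq_canonical by simp

section \<open>Permuting the signs of a weight\<close>

lemma wsim_iff:
  "wsim I lam mu \<longleftrightarrow> weight I lam \<and> weight I mu \<and>
     (\<exists>\<sigma> S. finite S \<and> S \<subseteq> sign_vertices I lam \<and> \<sigma> permutes S \<and> mu = lam \<circ> \<sigma>)"
proof
  assume "wsim I lam mu"
  then obtain \<sigma> where w: "weight I lam" "weight I mu" and \<sigma>: "bij \<sigma>" "finite {i. \<sigma> i \<noteq> i}"
    "\<And>i. \<sigma> i \<noteq> i \<Longrightarrow> i \<in> I \<and> lam i \<in> {Vee, Wedge}" "\<And>i. mu i = lam (\<sigma> i)"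
    unfolding wsim_def by blast
  have "\<sigma> permutes {i. \<sigma> i \<noteq> i}"
    using \<sigma>(1) unfolding permutes_def bij_iff by blast
  moreover have "{i. \<sigma> i \<noteq> i} \<subseteq> sign_vertices I lam"
    using \<sigma>(3) unfolding sign_vertices_def by auto
  moreover have "mu = lam \<circ> \<sigma>"
    using \<sigma>(4) by auto
  ultimately show "weight I lam \<and> weight I mu \<and>
     (\<exists>\<sigma> S. finite S \<and> S \<subseteq> sign_vertices I lam \<and> \<sigma> permutes S \<and> mu = lam \<circ> \<sigma>)"
    using w \<sigma>(2) by blast
next
  assume "weight I lam \<and> weight I mu \<and>
     (\<exists>\<sigma> S. finite S \<and> S \<subseteq> sign_vertices I lam \<and> \<sigma> permutes S \<and> mu = lam \<circ> \<sigma>)"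
  then obtain \<sigma> S where w: "weight I lam" "weight I mu"
    and S: "finite S" "S \<subseteq> sign_vertices I lam" "\<sigma> permutes S" "mu = lam \<circ> \<sigma>"
    by blast
  have moved: "{i. \<sigma> i \<noteq> i} \<subseteq> S"
    using permutes_not_in[OF S(3)] by blast
  show "wsim I lam mu"
    unfolding wsim_def
  proof (intro conjI w exI[of _ \<sigma>])
    show "bij \<sigma>"
      using permutes_bij[OF S(3)] .
    show "finite {i. \<sigma> i \<noteq> i}"
      using finite_subset[OF moved S(1)] .
    show "\<forall>i. \<sigma> i \<noteq> i \<longrightarrow> i \<in> I \<and> lam i \<in> {Vee, Wedge}"
      using moved S(2) unfolding sign_vertices_def by auto
    show "\<forall>i. mu i = lam (\<sigma> i)"
      using S(4) by simp
  qed
qed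

lemma wsimE:
  assumes "wsim I lam mu"
  obtains \<sigma> S where "finite S" "S \<subseteq> sign_vertices I lam" "\<sigma> permutes S" "mu = lam \<circ> \<sigma>"
  using assms unfolding wsim_iff by blast

lemma wsimI:
  "weight I lam \<Longrightarrow> weight I mu \<Longrightarrow> finite S \<Longrightarrow> S \<subseteq> sign_vertices I lam \<Longrightarrow> \<sigma> permutes S
    \<Longrightarrow> mu = lam \<circ> \<sigma> \<Longrightarrow> wsim I lam mu"
  unfolding wsim_iff by blast

lemma wsim_weight: "wsim I lam mu \<Longrightarrow> weight I lam" "wsim I lam mu \<Longrightarrow> weight I mu"
  unfolding wsim_def by auto

lemma weight_eq_off_finite:
  assumes "weight I lam" "finite D" "\<And>i. i \<notin> D \<Longrightarrow> mu i = lam i"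
  shows "weight I mu"
proof -
  obtain F where "finite F"
    and F: "\<forall>i j. i \<in> I - F \<longrightarrow> j \<in> I - F \<longrightarrow> i < j \<longrightarrow> \<not> (lam i = Vee \<and> lam j = Wedge)"
    using assms(1) unfolding weight_def by blast
  have "\<forall>i j. i \<in> I - (F \<union> D) \<longrightarrow> j \<in> I - (F \<union> D) \<longrightarrow> i < j \<longrightarrow> \<not> (mu i = Vee \<and> mu j = Wedge)"
    using F assms(3) by auto
  with \<open>finite F\<close> assms(2) show ?thesis
    unfolding weight_def by (intro exI[of _ "F \<union> D"]) simp
qed

lemma wsim_refl: "weight I lam \<Longrightarrow> wsim I lam lam"
  by (rule wsimI[of _ _ _ "{}" id]) auto

lemma permutes_sign_vertices:
  assumes "\<sigma> permutes S" "S \<subseteq> sign_vertices I lam"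
  shows "S \<subseteq> sign_vertices I (lam \<circ> \<sigma>)"
  using assms permutes_in_image[OF assms(1)] unfolding sign_vertices_def by auto

lemma wsim_eq_off_signs:
  assumes "wsim I lam mu" "i \<notin> sign_vertices I lam"
  shows "mu i = lam i"
proof -
  obtain \<sigma> S where "S \<subseteq> sign_vertices I lam" "\<sigma> permutes S" "mu = lam \<circ> \<sigma>"
    using wsimE[OF assms(1)] .
  with assms(2) show ?thesis
    using permutes_not_in by fastforce
qed

lemma wsim_sign_vertices:
  assumes "wsim I lam mu"
  shows "sign_vertices I mu = sign_vertices I lam"
proof -
  obtain \<sigma> S where S: "S \<subseteq> sign_vertices I lam" "\<sigma> permutes S" "mu = lam \<circ> \<sigma>"
    using wsimE[OF assms] .
  have "i \<in> sign_vertices I mu \<longleftrightarrow> i \<in> sign_vertices I lam" for i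
  proof (cases "i \<in> S")
    case True
    with S permutes_sign_vertices[OF S(2,1)] show ?thesis
      by auto
  next
    case False
    with S permutes_not_in[OF S(2)] show ?thesis
      unfolding sign_vertices_def by auto
  qed
  then show ?thesis
    by blast
qed

lemma wsim_sym:
  assumes "wsim I lam mu"
  shows "wsim I mu lam"
proof -
  obtain \<sigma> S where S: "finite S" "S \<subseteq> sign_vertices I lam" "\<sigma> permutes S" "mu = lam \<circ> \<sigma>"
    using wsimE[OF assms] .
  have "lam = mu \<circ> inv \<sigma>"
    using S(4) permutes_inverses(1)[OF S(3)] by auto
  moreover have "S \<subseteq> sign_vertices I mu"
    using permutes_sign_vertices[OF S(3,2)] S(4) by simp
  ultimately show ?thesis
    using wsimI[OF wsim_weight(2,1)[OF assms] S(1) _ permutes_inv[OF S(3)]] by blast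
qed

lemma wsim_trans:
  assumes "wsim I lam mu" "wsim I mu nu"
  shows "wsim I lam nu"
proof -
  obtain \<sigma> S where S: "finite S" "S \<subseteq> sign_vertices I lam" "\<sigma> permutes S" "mu = lam \<circ> \<sigma>"
    using wsimE[OF assms(1)] .
  obtain \<tau> T where T: "finite T" "T \<subseteq> sign_vertices I mu" "\<tau> permutes T" "nu = mu \<circ> \<tau>"
    using wsimE[OF assms(2)] .
  have "\<sigma> \<circ> \<tau> permutes S \<union> T"
    using permutes_compose permutes_subset S(3) T(3) by (metis sup_ge1 sup_ge2)
  moreover have "S \<union> T \<subseteq> sign_vertices I lam"
    using S(2) T(2) wsim_sign_vertices[OF assms(1)] by simp
  ultimately show ?thesis
    using wsimI[OF wsim_weight(1)[OF assms(1)] wsim_weight(2)[OF assms(2)]] S(1,4) T(1,4)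
    by (metis comp_assoc finite_UnI)
qed

lemma wsim_transpose:
  assumes "weight I lam" "i \<in> sign_vertices I lam" "j \<in> sign_vertices I lam"
  shows "wsim I lam (lam \<circ> Transposition.transpose i j)"
proof (rule wsimI[OF assms(1) _ _ _ permutes_swap_id[of i "{i, j}" j]])
  show "weight I (lam \<circ> Transposition.transpose i j)"
    by (rule weight_eq_off_finite[OF assms(1), of "{i, j}"]) auto
qed (use assms(2,3) in auto)

lemma wsim_window:
  assumes "wsim I lam mu"
  obtains S where "finite S" "S \<subseteq> I" "\<And>i. i \<notin> S \<Longrightarrow> mu i = lam i"
    "\<And>T l. S \<subseteq> T \<Longrightarrow> card {i \<in> T. mu i = l} = card {i \<in> T. lam i = l}"
proof -
  obtain \<sigma> S where S: "finite S" "S \<subseteq> sign_vertices I lam" "\<sigma> permutes S" "mu = lam \<circ> \<sigma>"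
    using wsimE[OF assms] .
  have card_eq: "card {i \<in> T. mu i = l} = card {i \<in> T. lam i = l}" if "S \<subseteq> T" for T l
  proof -
    have T: "\<sigma> permutes T"
      using permutes_subset[OF S(3) that] .
    have "\<sigma> ` {i \<in> T. mu i = l} = {i \<in> T. lam i = l}"
    proof
      show "\<sigma> ` {i \<in> T. mu i = l} \<subseteq> {i \<in> T. lam i = l}"
        using S(4) permutes_in_image[OF T] by auto
      show "{i \<in> T. lam i = l} \<subseteq> \<sigma> ` {i \<in> T. mu i = l}"
      proof
        fix j assume "j \<in> {i \<in> T. lam i = l}"
        then show "j \<in> \<sigma> ` {i \<in> T. mu i = l}"
          using S(4) permutes_inverses[OF T] permutes_in_image[OF T, of "inv \<sigma> j"]
          by (intro image_eqI[of _ _ "inv \<sigma> j"]) auto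
      qed
    qed
    then show ?thesis
      using card_image[OF permutes_inj_on[OF S(3)], of "{i \<in> T. mu i = l}"] by simp
  qed
  have off: "mu i = lam i" if "i \<notin> S" for i
    unfolding S(4) using permutes_not_in[OF S(3) that] by (simp only: comp_apply)
  have "S \<subseteq> I"
    using S(2) unfolding sign_vertices_def by auto
  from that[OF S(1) this off card_eq] show thesis .
qed

lemma wsim_card_label_eq:
  assumes "wsim I lam mu" "finite {i \<in> I. lam i = l}"
  shows "finite {i \<in> I. mu i = l}" "card {i \<in> I. mu i = l} = card {i \<in> I. lam i = l}"
proof -
  obtain S where S: "finite S" "S \<subseteq> I" "\<And>i. i \<notin> S \<Longrightarrow> mu i = lam i"
    "\<And>T l. S \<subseteq> T \<Longrightarrow> card {i \<in> T. mu i = l} = card {i \<in> T. lam i = l}"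
    using wsim_window[OF assms(1)] by blast
  let ?T = "S \<union> {i \<in> I. lam i = l}"
  have T_mu: "{i \<in> ?T. mu i = l} = {i \<in> I. mu i = l}"
    using S(2,3) by fastforce
  have T_lam: "{i \<in> ?T. lam i = l} = {i \<in> I. lam i = l}"
    using S(2) by blast
  have "finite ?T"
    using S(1) assms(2) by simp
  then show "finite {i \<in> I. mu i = l}"
    unfolding T_mu[symmetric] by simp
  show "card {i \<in> I. mu i = l} = card {i \<in> I. lam i = l}"
    using S(4)[of ?T l] T_mu T_lam by simp
qed

lemma card_filter_split:
  assumes "finite T" "E \<subseteq> T"
  shows "card {i \<in> T. P i} = card {i \<in> E. P i} + card {i \<in> T - E. P i}"
proof -
  have "{i \<in> T. P i} = {i \<in> E. P i} \<union> {i \<in> T - E. P i}"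
    using assms(2) by auto
  moreover have "card ({i \<in> E. P i} \<union> {i \<in> T - E. P i}) = card {i \<in> E. P i} + card {i \<in> T - E. P i}"
    by (rule card_Un_disjoint) (use assms in \<open>auto intro: finite_subset\<close>)
  ultimately show ?thesis
    by simp
qed

text \<open>Rays cannot change under \<open>\<sim>\<close>: if \<open>\<lambda>\<close> and \<open>\<mu>\<close> orient the same diagram and some ray turned
  from \<open>\<or>\<close> into \<open>\<and>\<close>, then all rays to its left are \<open>\<and>\<close> in \<open>\<mu>\<close>, so a large window would contain fewer
  \<open>\<or>\<close>'s in \<open>\<mu>\<close> than in \<open>\<lambda>\<close> (the cups contribute one \<open>\<or>\<close> each in both).\<close>

lemma oriented_ray_Vee_stays:
  assumes w: "wsim I lam mu" and cd: "cup_diagram I c"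
    and ol: "oriented I c lam" and om: "oriented I c mu"
    and r0: "r0 \<in> snd c" "lam r0 = Vee"
  shows "mu r0 = Vee"
proof (rule ccontr)
  assume "mu r0 \<noteq> Vee"
  then have mu_r0: "mu r0 = Wedge"
    using oriented_ray[OF om r0(1)] by simp
  obtain S where S: "finite S" "S \<subseteq> I" "\<And>i. i \<notin> S \<Longrightarrow> mu i = lam i"
    "\<And>T l. S \<subseteq> T \<Longrightarrow> card {i \<in> T. mu i = l} = card {i \<in> T. lam i = l}"
    using wsim_window[OF w] by blast
  let ?E = "cup_ends (fst c)"
  let ?T = "S \<union> ?E \<union> {r0}"
  have fin: "finite ?T"
    using S(1) finite_cup_ends[OF cup_diagram_finite[OF cd]] by simp
  have split: "card {i \<in> ?T. P i} = card {i \<in> ?E. P i} + card {i \<in> ?T - ?E. P i}" for P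
    using card_filter_split[OF fin, of ?E] by blast
  have "{i \<in> ?T - ?E. mu i = Vee} \<subseteq> {i \<in> ?T - ?E. lam i = Vee}"
  proof
    fix i assume i: "i \<in> {i \<in> ?T - ?E. mu i = Vee}"
    show "i \<in> {i \<in> ?T - ?E. lam i = Vee}"
    proof (cases "i \<in> snd c")
      case True
      have "r0 < i"
        using oriented_rays_ordered[OF om True r0(1)] i mu_r0 by simp
      then have "lam i \<noteq> Wedge"
        using oriented_rays_ordered[OF ol r0(1) True] r0(2) by fastforce
      then show ?thesis
        using i oriented_ray[OF ol True] by auto
    next
      case False
      then have "i \<notin> I"
        using i oriented_free[OF om, of i] by auto
      then have "i \<notin> S"
        using S(2) by blast
      then show ?thesis
        using i S(3)[of i] by auto
    qed
  qed
  moreover have "r0 \<in> {i \<in> ?T - ?E. lam i = Vee}" "r0 \<notin> {i \<in> ?T - ?E. mu i = Vee}"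
    using r0 mu_r0 cup_diagram_ray_not_end[OF cd r0(1)] by auto
  ultimately have "card {i \<in> ?T - ?E. mu i = Vee} < card {i \<in> ?T - ?E. lam i = Vee}"
    using fin by (intro psubset_card_mono) auto
  moreover have "card {i \<in> ?E. mu i = Vee} = card {i \<in> ?E. lam i = Vee}"
    using card_cup_ends_Vee[OF cd ol] card_cup_ends_Vee[OF cd om] by simp
  ultimately have "card {i \<in> ?T. mu i = Vee} < card {i \<in> ?T. lam i = Vee}"
    unfolding split by simp
  moreover have "S \<subseteq> ?T"
    by blast
  ultimately show False
    using S(4)[of ?T Vee] by linarith
qed

lemma oriented_rays_eq:
  assumes w: "wsim I lam mu" and cd: "cup_diagram I c"
    and ol: "oriented I c lam" and om: "oriented I c mu" and r: "r \<in> snd c"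
  shows "mu r = lam r"
  using oriented_ray_Vee_stays[OF w cd ol om r] oriented_ray_Vee_stays[OF wsim_sym[OF w] cd om ol r]
    oriented_ray[OF ol r] oriented_ray[OF om r] by auto

section \<open>Weights above a weight\<close>

fun opposite :: "label \<Rightarrow> label" where
  "opposite Vee = Wedge" | "opposite Wedge = Vee" | "opposite Circ = Circ" | "opposite Cross = Cross"

definition flip_cups :: "(int \<times> int) set \<Rightarrow> (int \<Rightarrow> label) \<Rightarrow> int \<Rightarrow> label" where
  "flip_cups A lam i = (if i \<in> cup_ends A then opposite (lam i) else lam i)"

lemma flip_cups_empty [simp]: "flip_cups {} lam = lam"
  unfolding flip_cups_def cup_ends_def by simp

lemma cup_in_subset_if_end:
  assumes cd: "cup_diagram I c" and A: "A \<subseteq> fst c" and ab: "(a, b) \<in> fst c"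
    and "a \<in> cup_ends A \<or> b \<in> cup_ends A"
  shows "(a, b) \<in> A"
proof -
  obtain x y where xy: "(x, y) \<in> A" "a = x \<or> a = y \<or> b = x \<or> b = y"
    using assms(4) unfolding cup_ends_iff by blast
  with A have "a = x \<and> b = y"
    using cup_diagram_cups_eq[OF cd ab, of x y] by blast
  with xy show ?thesis
    by simp
qed

lemma flip_cups_insert:
  assumes cd: "cup_diagram I c" and or: "oriented I c lam"
    and A: "insert (a, b) A \<subseteq> fst c" "(a, b) \<notin> A"
  shows "flip_cups (insert (a, b) A) lam = flip_cups A lam \<circ> Transposition.transpose a b"
proof
  fix i
  have ab: "(a, b) \<in> fst c" "A \<subseteq> fst c"
    using A(1) by auto
  have not_ends: "a \<notin> cup_ends A" "b \<notin> cup_ends A"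
    using cup_in_subset_if_end[OF cd ab(2) ab(1)] A(2) by auto
  have "a < b"
    using cup_diagram_cup[OF cd ab(1)] by simp
  have "opposite (lam a) = lam b" "opposite (lam b) = lam a"
    using oriented_cup[OF or ab(1)] by auto
  with not_ends \<open>a < b\<close> show "flip_cups (insert (a, b) A) lam i = (flip_cups A lam \<circ> Transposition.transpose a b) i"
    unfolding flip_cups_def cup_ends_insert by (auto simp: transpose_def)
qed

lemma wsim_flip_cups:
  assumes w: "weight I lam" and cd: "cup_diagram I c" and or: "oriented I c lam" and A: "A \<subseteq> fst c"
  shows "wsim I lam (flip_cups A lam)"
proof -
  have "finite A"
    using finite_subset[OF A cup_diagram_finite[OF cd]] .
  then show ?thesis
    using A
  proof (induction A rule: finite_subset_induct')
    case empty
    show ?case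
      using wsim_refl[OF w] by simp
  next
    case (insert p A)
    obtain a b where p: "p = (a, b)"
      by fastforce
    have "a \<notin> cup_ends A" "b \<notin> cup_ends A"
      using cup_in_subset_if_end[OF cd insert(3), of a b] insert(2,4) p by auto
    then have "a \<in> sign_vertices I (flip_cups A lam)" "b \<in> sign_vertices I (flip_cups A lam)"
      using cup_diagram_cup[OF cd, of a b] oriented_cup[OF or, of a b] insert(2) p
      unfolding flip_cups_def sign_vertices_def by auto
    then have "wsim I (flip_cups A lam) (flip_cups (insert p A) lam)"
      using wsim_transpose[OF wsim_weight(2)[OF insert(5)]] flip_cups_insert[OF cd or, of a b A]
        insert(2,3,4) p by simp
    with insert(5) show ?case
      by (rule wsim_trans)
  qed
qed

lemma oriented_flip_cups:
  assumes cd: "cup_diagram I c" and or: "oriented I c lam" and A: "A \<subseteq> fst c"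
  shows "oriented I c (flip_cups A lam)"
proof -
  obtain C R where c: "c = (C, R)"
    by fastforce
  have ends: "cup_ends A \<subseteq> cup_ends C"
    using cup_ends_mono A c by simp
  have rays: "r \<notin> cup_ends A" if "r \<in> R" for r
    using cup_diagram_ray_not_end[OF cd, of r] that ends c by auto
  show ?thesis
    unfolding c
  proof (rule orientedI)
    show "flip_cups A lam i = Circ \<or> flip_cups A lam i = Cross"
      if "i \<in> I" "i \<notin> cup_ends C" "i \<notin> R" for i
      using that oriented_free[OF or, of i] ends c unfolding flip_cups_def by auto
    show "(flip_cups A lam a = Vee \<and> flip_cups A lam b = Wedge) \<or>
      (flip_cups A lam a = Wedge \<and> flip_cups A lam b = Vee)" if "(a, b) \<in> C" for a b
    proof (cases "(a, b) \<in> A")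
      case True
      then have "a \<in> cup_ends A" "b \<in> cup_ends A"
        unfolding cup_ends_iff by auto
      with oriented_cup[OF or, of a b] that c show ?thesis
        unfolding flip_cups_def by auto
    next
      case False
      then have "a \<notin> cup_ends A" "b \<notin> cup_ends A"
        using cup_in_subset_if_end[OF cd A, of a b] that c by auto
      with oriented_cup[OF or, of a b] that c show ?thesis
        unfolding flip_cups_def by auto
    qed
    show "flip_cups A lam r = Vee \<or> flip_cups A lam r = Wedge" if "r \<in> R" for r
      using that rays oriented_ray[OF or, of r] c unfolding flip_cups_def by auto
    show "r2 < r1" if "r1 \<in> R" "r2 \<in> R" "flip_cups A lam r1 = Vee" "flip_cups A lam r2 = Wedge" for r1 r2
      using that rays oriented_rays_ordered[OF or, of r1 r2] c unfolding flip_cups_def by auto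
  qed
qed

lemma wsub_flip_cups:
  assumes "weight I lam" "A \<subseteq> fst (under I lam)"
  shows "wsub I lam (flip_cups A lam)"
proof -
  have "cup_diagram I (under I lam)" "oriented I (under I lam) lam"
    using is_under_under[OF assms(1)] unfolding is_under_def by auto
  with assms show ?thesis
    unfolding wsub_def using wsim_flip_cups oriented_flip_cups by blast
qed

lemma wsim_oriented_eq_off_cups:
  assumes u: "is_under I lam c" and w: "wsim I lam mu" and om: "oriented I c mu"
    and i: "i \<notin> cup_ends (fst c)"
  shows "mu i = lam i"
proof (cases "i \<in> snd c")
  case True
  with u w om show ?thesis
    using oriented_rays_eq unfolding is_under_def by blast
next
  case False
  with i is_under_rays[OF u] have "i \<notin> sign_vertices I lam"
    by blast
  with w show ?thesis
    by (rule wsim_eq_off_signs)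
qed

lemma wsub_eq_flip_cups:
  assumes w: "weight I lam" and m: "wsub I lam mu"
  shows "mu = flip_cups {p \<in> fst (under I lam). mu (fst p) \<noteq> lam (fst p)} lam"
    (is "mu = flip_cups ?A lam")
proof
  fix i
  let ?C = "fst (under I lam)"
  have u: "is_under I lam (under I lam)"
    using is_under_under[OF w] .
  have cd: "cup_diagram I (under I lam)"
    using u unfolding is_under_def by auto
  have ws: "wsim I lam mu" and om: "oriented I (under I lam) mu"
    using m unfolding wsub_def by auto
  show "mu i = flip_cups ?A lam i"
  proof (cases "i \<in> cup_ends ?C")
    case True
    then obtain a b where ab: "(a, b) \<in> ?C" "i = a \<or> i = b"
      unfolding cup_ends_iff by blast
    have lam_ab: "lam a = Vee" "lam b = Wedge"
      using is_under_cup[OF u ab(1)] by auto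
    show ?thesis
    proof (cases "(a, b) \<in> ?A")
      case True
      then have "i \<in> cup_ends ?A"
        using ab(2) unfolding cup_ends_iff by auto
      moreover have "mu a = Wedge" "mu b = Vee"
        using True lam_ab oriented_cup[OF om ab(1)] by auto
      ultimately show ?thesis
        using ab(2) lam_ab unfolding flip_cups_def by auto
    next
      case False
      then have "i \<notin> cup_ends ?A"
        using cup_in_subset_if_end[OF cd _ ab(1), of ?A] ab(2) by auto
      moreover have "mu a = Vee" "mu b = Wedge"
        using False ab(1) lam_ab oriented_cup[OF om ab(1)] by auto
      ultimately show ?thesis
        using ab(2) lam_ab unfolding flip_cups_def by auto
    qed
  next
    case False
    moreover have "cup_ends ?A \<subseteq> cup_ends ?C"
      by (rule cup_ends_mono) auto
    ultimately show ?thesis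
      using wsim_oriented_eq_off_cups[OF u ws om False] unfolding flip_cups_def by auto
  qed
qed

lemma inj_on_flip_cups:
  assumes cd: "cup_diagram I c" and or: "oriented I c lam"
  shows "inj_on (\<lambda>A. flip_cups A lam) (Pow (fst c))"
proof -
  have "A \<subseteq> B" if AB: "A \<subseteq> fst c" "B \<subseteq> fst c" and eq: "flip_cups A lam = flip_cups B lam" for A B
  proof
    fix p assume "p \<in> A"
    obtain a b where p: "p = (a, b)"
      by fastforce
    with \<open>p \<in> A\<close> have "a \<in> cup_ends A" "(a, b) \<in> fst c"
      using AB(1) unfolding cup_ends_iff by auto
    moreover have "opposite (lam a) \<noteq> lam a"
      using oriented_cup[OF or \<open>(a, b) \<in> fst c\<close>] by auto
    ultimately have "a \<in> cup_ends B"
      using fun_cong[OF eq, of a] unfolding flip_cups_def by (auto split: if_splits)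
    then show "p \<in> B"
      using cup_in_subset_if_end[OF cd AB(2) \<open>(a, b) \<in> fst c\<close>] p by simp
  qed
  then show ?thesis
    by (intro inj_onI subset_antisym) auto
qed

theorem card_weights_above:
  assumes w: "weight I lam"
  shows "finite {mu. wsub I lam mu}" "card {mu. wsub I lam mu} = 2 ^ defect I lam"
proof -
  let ?C = "fst (under I lam)"
  have cd: "cup_diagram I (under I lam)" and or: "oriented I (under I lam) lam"
    using is_under_under[OF w] unfolding is_under_def by auto
  have image: "{mu. wsub I lam mu} = (\<lambda>A. flip_cups A lam) ` Pow ?C"
  proof
    show "{mu. wsub I lam mu} \<subseteq> (\<lambda>A. flip_cups A lam) ` Pow ?C"
      using wsub_eq_flip_cups[OF w] by blast
    show "(\<lambda>A. flip_cups A lam) ` Pow ?C \<subseteq> {mu. wsub I lam mu}"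
      using wsub_flip_cups[OF w] by blast
  qed
  have fin: "finite ?C"
    using cup_diagram_finite[OF cd] .
  then show "finite {mu. wsub I lam mu}"
    unfolding image by simp
  show "card {mu. wsub I lam mu} = 2 ^ defect I lam"
    unfolding image defect_def card_image[OF inj_on_flip_cups[OF cd or]] card_Pow[OF fin] ..
qed

section \<open>Weights below a weight of bounded defect\<close>

lemma wsubD:
  assumes "wsub I mu lam"
  shows "wsim I lam mu" "weight I mu" "is_under I mu (under I mu)" "oriented I (under I mu) lam"
    "sign_vertices I mu = sign_vertices I lam"
proof -
  have ws: "wsim I mu lam"
    using assms unfolding wsub_def by simp
  show "wsim I lam mu"
    using wsim_sym[OF ws] .
  show "weight I mu"
    using wsim_weight(1)[OF ws] .
  then show "is_under I mu (under I mu)"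
    by (rule is_under_under)
  show "oriented I (under I mu) lam"
    using assms unfolding wsub_def by simp
  show "sign_vertices I mu = sign_vertices I lam"
    using wsim_sign_vertices[OF ws] by simp
qed

lemma wsub_eq_if_cups_eq:
  assumes m1: "wsub I m1 lam" and m2: "wsub I m2 lam" and eq: "fst (under I m1) = fst (under I m2)"
  shows "m1 = m2"
proof
  fix i
  note f1 = wsubD[OF m1] and f2 = wsubD[OF m2]
  let ?c = "under I m1"
  have "snd (under I m1) = snd (under I m2)"
    using is_under_rays[OF f1(3)] is_under_rays[OF f2(3)] f1(5) f2(5) eq by simp
  with eq have same: "under I m2 = ?c"
    by (simp add: prod_eq_iff)
  show "m1 i = m2 i"
  proof (cases "i \<in> cup_ends (fst ?c)")
    case True
    then obtain a b where "(a, b) \<in> fst ?c" "i = a \<or> i = b"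
      unfolding cup_ends_iff by blast
    then show ?thesis
      using is_under_cup[OF f1(3)] is_under_cup[OF f2(3)] same by fastforce
  next
    case False
    then show ?thesis
      using wsim_oriented_eq_off_cups[OF f1(3) wsim_sym[OF f1(1)] f1(4)]
        wsim_oriented_eq_off_cups[OF f2(3) wsim_sym[OF f2(1)] f2(4)] same by simp
  qed
qed

lemma card_signs_within_cup:
  assumes u: "is_under I mu c" and ab: "(a, b) \<in> fst c"
  shows "card (sign_vertices I mu \<inter> {a..b}) \<le> 2 * card (fst c)"
proof -
  have cd: "cup_diagram I c"
    using u unfolding is_under_def by simp
  have "sign_vertices I mu \<inter> {a..b} \<subseteq> cup_ends (fst c)"
  proof
    fix i assume i: "i \<in> sign_vertices I mu \<inter> {a..b}"
    show "i \<in> cup_ends (fst c)"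
    proof (cases "i = a \<or> i = b")
      case True
      with ab show ?thesis
        unfolding cup_ends_iff by blast
    next
      case False
      with i have "i \<notin> snd c"
        using cup_diagram_ray_not_nested[OF cd _ ab] by force
      with i is_under_rays[OF u] show ?thesis
        by blast
    qed
  qed
  then have "card (sign_vertices I mu \<inter> {a..b}) \<le> card (cup_ends (fst c))"
    by (rule card_mono[OF finite_cup_ends[OF cup_diagram_finite[OF cd]]])
  also have "\<dots> \<le> 2 * card (fst c)"
    by (rule card_cup_ends_le[OF cup_diagram_finite[OF cd]])
  finally show ?thesis .
qed

definition nearby :: "int set \<Rightarrow> nat \<Rightarrow> int \<Rightarrow> int set" where
  "nearby P n k = {x \<in> P. card (P \<inter> {min x k..max x k}) \<le> n}"

lemma card_le_if_nearby:
  assumes "finite Z" "Z \<subseteq> nearby P n k" "m \<in> Z" "Z \<subseteq> {min m k..max m k}"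
  shows "card Z \<le> n"
proof -
  have "card Z \<le> card (P \<inter> {min m k..max m k})"
    using assms(2,4) by (intro card_mono) (auto simp: nearby_def)
  also have "\<dots> \<le> n"
    using assms(2,3) unfolding nearby_def by auto
  finally show ?thesis .
qed

lemma finite_nearby: "finite (nearby P n k)"
proof -
  have right: "finite {x \<in> nearby P n k. k \<le> x}"
  proof (rule ccontr)
    assume "infinite {x \<in> nearby P n k. k \<le> x}"
    then obtain Z where Z: "finite Z" "card Z = Suc n" "Z \<subseteq> {x \<in> nearby P n k. k \<le> x}"
      using infinite_arbitrarily_large by blast
    then have m: "Max Z \<in> Z"
      by (intro Max_in) auto
    moreover have "Z \<subseteq> {min (Max Z) k..max (Max Z) k}"
      using Z(3) Max_ge[OF Z(1)] m by fastforce
    ultimately have "card Z \<le> n"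
      using card_le_if_nearby[OF Z(1)] Z(3) by blast
    with Z(2) show False
      by simp
  qed
  have left: "finite {x \<in> nearby P n k. x \<le> k}"
  proof (rule ccontr)
    assume "infinite {x \<in> nearby P n k. x \<le> k}"
    then obtain Z where Z: "finite Z" "card Z = Suc n" "Z \<subseteq> {x \<in> nearby P n k. x \<le> k}"
      using infinite_arbitrarily_large by blast
    then have m: "Min Z \<in> Z"
      by (intro Min_in) auto
    moreover have "Z \<subseteq> {min (Min Z) k..max (Min Z) k}"
      using Z(3) Min_le[OF Z(1)] m by fastforce
    ultimately have "card Z \<le> n"
      using card_le_if_nearby[OF Z(1)] Z(3) by blast
    with Z(2) show False
      by simp
  qed
  have "nearby P n k = {x \<in> nearby P n k. k \<le> x} \<union> {x \<in> nearby P n k. x \<le> k}"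
    by auto
  with left right show ?thesis
    by (metis finite_Un)
qed

definition anchors :: "int set \<Rightarrow> (int \<Rightarrow> label) \<Rightarrow> int set \<Rightarrow> int set" where
  "anchors I lam F = F \<union> {x \<in> I - F. lam x = Vee \<and> (\<forall>y \<in> I - F. lam y = Vee \<longrightarrow> x \<le> y)}"

lemma finite_anchors: "finite F \<Longrightarrow> finite (anchors I lam F)"
  unfolding anchors_def by (auto intro: finite_if_subsingleton order_antisym)

lemma anchor_between_Wedge_Vee:
  assumes F: "weight_exceptions I lam F"
    and a: "a \<in> I - F" "lam a = Wedge" and b: "b \<in> I - F" "lam b = Vee" and "a < b"
  obtains v where "v \<in> anchors I lam F" "a < v" "v \<le> b"
proof -
  let ?V = "{y \<in> I - F. lam y = Vee}"
  have right_of_a: "a < y" if "y \<in> ?V" for y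
  proof (rule ccontr)
    assume "\<not> a < y"
    moreover have "y \<noteq> a"
      using that a by auto
    ultimately have "y < a"
      by simp
    with that F a show False
      unfolding weight_exceptions_def by blast
  qed
  have "{y \<in> ?V. y \<le> b} \<subseteq> {a..b}"
    using right_of_a by (force intro: less_imp_le)
  then have fin: "finite {y \<in> ?V. y \<le> b}"
    by (rule finite_subset) simp
  define v where "v = Min {y \<in> ?V. y \<le> b}"
  have v: "v \<in> ?V" "v \<le> b"
    using Min_in[OF fin] b unfolding v_def by auto
  have "v \<le> y" if "y \<in> ?V" for y
    using Min_le[OF fin, of y] that v(2) unfolding v_def by (cases "y \<le> b") auto
  then have "v \<in> anchors I lam F"
    using v unfolding anchors_def by auto
  with that v right_of_a show thesis
    by blast
qed

lemma cup_encloses_anchor: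
  assumes F: "weight_exceptions I lam F" and m: "wsub I mu lam" and ab: "(a, b) \<in> fst (under I mu)"
  obtains k where "k \<in> anchors I lam F" "a \<le> k" "k \<le> b"
proof -
  note f = wsubD[OF m]
  have abI: "a \<in> I" "b \<in> I" "a < b"
    using f(3) cup_diagram_cup[of I "under I mu" a b] ab unfolding is_under_def by auto
  consider "a \<in> F" | "b \<in> F" | "a \<notin> F" "b \<notin> F"
    by blast
  then show thesis
  proof cases
    case 1
    with abI that[of a] show thesis
      unfolding anchors_def by auto
  next
    case 2
    with abI that[of b] show thesis
      unfolding anchors_def by auto
  next
    case 3
    with F abI oriented_cup[OF f(4) ab] have "lam a = Wedge" "lam b = Vee"
      unfolding weight_exceptions_def by auto
    then obtain v where "v \<in> anchors I lam F" "a < v" "v \<le> b"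
      using anchor_between_Wedge_Vee[OF F, of a b] 3 abI by blast
    with that[of v] show thesis
      by simp
  qed
qed

lemma finite_wsub_below_defect_le:
  assumes w: "weight I lam"
  shows "finite {mu. wsub I mu lam \<and> defect I mu \<le> N}"
proof -
  obtain F where F: "weight_exceptions I lam F"
    using weight_exceptions_exist[OF w] .
  let ?P = "sign_vertices I lam"
  let ?E = "\<Union>k \<in> anchors I lam F. nearby ?P (2 * N) k"
  let ?X = "{mu. wsub I mu lam \<and> defect I mu \<le> N}"
  have fin_E: "finite ?E"
    using finite_anchors[of F I lam] F finite_nearby unfolding weight_exceptions_def by blast
  have "fst (under I mu) \<subseteq> ?E \<times> ?E" if "mu \<in> ?X" for mu
  proof
    fix p assume p: "p \<in> fst (under I mu)"
    obtain a b where ab: "p = (a, b)"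
      by fastforce
    have m: "wsub I mu lam" and N: "card (fst (under I mu)) \<le> N"
      using that unfolding defect_def by auto
    note f = wsubD[OF m]
    have ends: "a \<in> ?P" "b \<in> ?P"
      using is_under_cup[OF f(3), of a b] cup_diagram_cup[of I "under I mu" a b] f(3,5) p ab
      unfolding is_under_def sign_vertices_def by auto
    have span: "card (?P \<inter> {a..b}) \<le> 2 * N"
      using card_signs_within_cup[OF f(3), of a b] p ab f(5) N by simp
    obtain k where k: "k \<in> anchors I lam F" "a \<le> k" "k \<le> b"
      using cup_encloses_anchor[OF F m, of a b] p ab by blast
    have near: "card (?P \<inter> {min x k..max x k}) \<le> 2 * N" if "a \<le> x" "x \<le> b" for x
      using span card_mono[of "?P \<inter> {a..b}" "?P \<inter> {min x k..max x k}"] that k by fastforce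
    have "a \<in> nearby ?P (2 * N) k" "b \<in> nearby ?P (2 * N) k"
      using ends k near[of a] near[of b] unfolding nearby_def by auto
    with k ab show "p \<in> ?E \<times> ?E"
      by blast
  qed
  then have "(\<lambda>mu. fst (under I mu)) ` ?X \<subseteq> Pow (?E \<times> ?E)"
    by blast
  then have "finite ((\<lambda>mu. fst (under I mu)) ` ?X)"
    using fin_E by (meson finite_Pow_iff finite_SigmaI finite_subset)
  moreover have "inj_on (\<lambda>mu. fst (under I mu)) ?X"
    using wsub_eq_if_cups_eq by (auto intro: inj_onI)
  ultimately show ?thesis
    by (rule finite_imageD)
qed

lemma defect_le_cdeg_add:
  assumes F: "weight_exceptions I lam F" and m: "wsub I mu lam"
  shows "defect I mu \<le> cdeg (under I mu) lam + card F"
proof -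
  note f = wsubD[OF m]
  let ?C = "fst (under I mu)"
  let ?cw = "{(a, b) \<in> ?C. lam a = Wedge}" and ?acw = "{(a, b) \<in> ?C. lam a \<noteq> Wedge}"
  have cd: "cup_diagram I (under I mu)"
    using f(3) unfolding is_under_def by simp
  have "card ?acw \<le> card F"
  proof (rule card_cups_le[OF cd])
    show "?acw \<subseteq> ?C"
      by auto
    show "finite F"
      using F unfolding weight_exceptions_def by simp
    fix a b assume "(a, b) \<in> ?acw"
    then have ab: "(a, b) \<in> ?C" "lam a = Vee" "lam b = Wedge"
      using oriented_cup[OF f(4), of a b] by auto
    with cup_diagram_cup[OF cd ab(1)] F show "a \<in> F \<or> b \<in> F"
      unfolding weight_exceptions_def by blast
  qed
  moreover have "card ?C = card (?cw \<union> ?acw)"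
    by (rule arg_cong[where f = card]) auto
  then have "card ?C \<le> card ?cw + card ?acw"
    using card_Un_le[of ?cw ?acw] by linarith
  ultimately show ?thesis
    unfolding defect_def cdeg_def by linarith
qed

theorem finite_weights_below_of_degree:
  assumes w: "weight I lam"
  shows "finite {mu. wsub I mu lam \<and> int (cdeg (under I mu) lam) = j}"
proof -
  obtain F where F: "weight_exceptions I lam F"
    using weight_exceptions_exist[OF w] .
  have "{mu. wsub I mu lam \<and> int (cdeg (under I mu) lam) = j}
      \<subseteq> {mu. wsub I mu lam \<and> defect I mu \<le> card F + nat j}"
    using defect_le_cdeg_add[OF F] by fastforce
  then show ?thesis
    using finite_wsub_below_defect_le[OF w] by (rule finite_subset)
qed

theorem finite_weights_below_if_block_defect_finite:
  assumes w: "weight I lam" and b: "block_defect I lam < \<infinity>"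
  shows "finite {mu. wsub I mu lam}"
proof -
  obtain d where d: "block_defect I lam = enat d"
    using b by (cases "block_defect I lam") auto
  have "defect I mu \<le> d" if "wsub I mu lam" for mu
  proof -
    have "enat (defect I mu) \<le> block_defect I lam"
      unfolding block_defect_def using wsubD(1)[OF that] by (auto intro: SUP_upper)
    with d show ?thesis
      by simp
  qed
  then have "{mu. wsub I mu lam} \<subseteq> {mu. wsub I mu lam \<and> defect I mu \<le> d}"
    by blast
  then show ?thesis
    using finite_wsub_below_defect_le[OF w] by (rule finite_subset)
qed

section \<open>Weights below a weight of unbounded defect\<close>

lemma defect_le_card_label:
  assumes w: "weight I mu" and fin: "finite {i \<in> I. mu i = l}" and l: "l = Vee \<or> l = Wedge"
  shows "defect I mu \<le> card {i \<in> I. mu i = l}"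
proof -
  have u: "is_under I mu (under I mu)"
    using is_under_under[OF w] .
  then have cd: "cup_diagram I (under I mu)"
    unfolding is_under_def by simp
  have "card (fst (under I mu)) \<le> card {i \<in> I. mu i = l}"
  proof (rule card_cups_le[OF cd subset_refl fin])
    fix a b assume "(a, b) \<in> fst (under I mu)"
    with is_under_cup[OF u] cup_diagram_cup[OF cd] l show "a \<in> {i \<in> I. mu i = l} \<or> b \<in> {i \<in> I. mu i = l}"
      by auto
  qed
  then show ?thesis
    unfolding defect_def .
qed

lemma block_defect_finite_if_label_finite:
  assumes w: "weight I lam" and fin: "finite {i \<in> I. lam i = l}" and l: "l = Vee \<or> l = Wedge"
  shows "block_defect I lam < \<infinity>"
proof -
  have "block_defect I lam \<le> enat (card {i \<in> I. lam i = l})"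
    unfolding block_defect_def
  proof (rule SUP_least)
    fix mu assume "mu \<in> {mu. wsim I lam mu}"
    then have ws: "wsim I lam mu"
      by simp
    have "defect I mu \<le> card {i \<in> I. mu i = l}"
      using defect_le_card_label[OF wsim_weight(2)[OF ws] wsim_card_label_eq(1)[OF ws fin] l] .
    then show "enat (defect I mu) \<le> enat (card {i \<in> I. lam i = l})"
      using wsim_card_label_eq(2)[OF ws fin] by simp
  qed
  then show ?thesis
    using enat_ord_simps(4) order_le_less_trans by blast
qed

lemma innermost_opposite_rays:
  assumes or: "oriented I c mu" and w0: "w0 \<in> snd c" "mu w0 = Wedge" and v0: "v0 \<in> snd c" "mu v0 = Vee"
  obtains w v where "w \<in> snd c" "mu w = Wedge" "v \<in> snd c" "mu v = Vee" "w < v"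
    "\<And>r. r \<in> snd c \<Longrightarrow> w < r \<Longrightarrow> r < v \<Longrightarrow> False"
proof -
  let ?RW = "{r \<in> snd c. mu r = Wedge}" and ?RV = "{r \<in> snd c. mu r = Vee}"
  have WV: "x < y" if "x \<in> ?RW" "y \<in> ?RV" for x y
    using oriented_rays_ordered[OF or, of y x] that by simp
  have "{r \<in> ?RW. w0 \<le> r} \<subseteq> {w0..v0}" "{r \<in> ?RV. r \<le> v0} \<subseteq> {w0..v0}"
    using WV[of _ v0] WV[of w0] w0 v0 by (force intro: less_imp_le)+
  then have fin: "finite {r \<in> ?RW. w0 \<le> r}" "finite {r \<in> ?RV. r \<le> v0}"
    by (auto intro: finite_subset)
  define w where "w = Max {r \<in> ?RW. w0 \<le> r}"
  define v where "v = Min {r \<in> ?RV. r \<le> v0}"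
  have w: "w \<in> ?RW" "w0 \<le> w"
    using Max_in[OF fin(1)] w0 unfolding w_def by auto
  have v: "v \<in> ?RV" "v \<le> v0"
    using Min_in[OF fin(2)] v0 unfolding v_def by auto
  have w_max: "r \<le> w" if "r \<in> ?RW" for r
    using Max_ge[OF fin(1), of r] that w(2) unfolding w_def by (cases "w0 \<le> r") auto
  have v_min: "v \<le> r" if "r \<in> ?RV" for r
    using Min_le[OF fin(2), of r] that v(2) unfolding v_def by (cases "r \<le> v0") auto
  show thesis
  proof (rule that)
    show "w \<in> snd c" "mu w = Wedge" "v \<in> snd c" "mu v = Vee" "w < v"
      using w v WV by auto
    show False if "r \<in> snd c" "w < r" "r < v" for r
      using oriented_ray[OF or that(1)] w_max[of r] v_min[of r] that by auto
  qed
qed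

definition join_rays :: "int \<Rightarrow> int \<Rightarrow> cupdiag \<Rightarrow> cupdiag" where
  "join_rays w v c = (insert (w, v) (fst c), snd c - {w, v})"

lemma cup_diagram_join_rays:
  assumes cd: "cup_diagram I c" and wv: "w \<in> snd c" "v \<in> snd c" "w < v"
    and between: "\<And>r. r \<in> snd c \<Longrightarrow> w < r \<Longrightarrow> r < v \<Longrightarrow> False"
  shows "cup_diagram I (join_rays w v c)"
  unfolding join_rays_def
proof (rule cup_diagramI)
  have off: "w \<noteq> x \<and> v \<noteq> x \<and> w \<noteq> y \<and> v \<noteq> y" if "(x, y) \<in> fst c" for x y
    using cup_diagram_ray_not_end[OF cd] wv that unfolding cup_ends_iff by blast
  show "finite (insert (w, v) (fst c))"
    using cup_diagram_finite[OF cd] by simp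
  show "a \<in> I \<and> b \<in> I \<and> a < b" if "(a, b) \<in> insert (w, v) (fst c)" for a b
    using that cup_diagram_cup[OF cd, of a b] cup_diagram_rays[OF cd] wv by auto
  show "a = a' \<and> b = b'" if "(a, b) \<in> insert (w, v) (fst c)" "(a', b') \<in> insert (w, v) (fst c)"
    "a = a' \<or> a = b' \<or> b = a' \<or> b = b'" for a b a' b'
    using that cup_diagram_cups_eq[OF cd, of a b a' b'] off[of a b] off[of a' b'] by auto
  show False if "(a, b) \<in> insert (w, v) (fst c)" "(a', b') \<in> insert (w, v) (fst c)" "a < a'" "a' < b" "b < b'"
    for a b a' b'
    using that cup_diagram_noncrossing[OF cd, of a b a' b'] cup_diagram_ray_not_nested[OF cd wv(1), of a b]
      cup_diagram_ray_not_nested[OF cd wv(2), of a' b'] by auto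
  show "snd c - {w, v} \<subseteq> I"
    using cup_diagram_rays[OF cd] by auto
  show "r \<notin> cup_ends (insert (w, v) (fst c))" if "r \<in> snd c - {w, v}" for r
    using that cup_diagram_ray_not_end[OF cd, of r] unfolding cup_ends_insert by simp
  show False if "r \<in> snd c - {w, v}" "(a, b) \<in> insert (w, v) (fst c)" "a < r" "r < b" for r a b
    using that between[of r] cup_diagram_ray_not_nested[OF cd, of r a b] by auto
qed

lemma oriented_join_rays:
  assumes cd: "cup_diagram I c" and or: "oriented I c lam" and wv: "w \<in> snd c" "v \<in> snd c"
    and same: "\<And>i. i \<noteq> w \<Longrightarrow> i \<noteq> v \<Longrightarrow> lam' i = lam i"
    and new_cup: "(lam' w = Vee \<and> lam' v = Wedge) \<or> (lam' w = Wedge \<and> lam' v = Vee)"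
  shows "oriented I (join_rays w v c) lam'"
  unfolding join_rays_def
proof (rule orientedI)
  have off: "w \<noteq> x \<and> v \<noteq> x \<and> w \<noteq> y \<and> v \<noteq> y" if "(x, y) \<in> fst c" for x y
    using cup_diagram_ray_not_end[OF cd] wv that unfolding cup_ends_iff by blast
  show "lam' i = Circ \<or> lam' i = Cross"
    if "i \<in> I" "i \<notin> cup_ends (insert (w, v) (fst c))" "i \<notin> snd c - {w, v}" for i
    using that oriented_free[OF or, of i] same[of i] unfolding cup_ends_insert by simp
  show "(lam' a = Vee \<and> lam' b = Wedge) \<or> (lam' a = Wedge \<and> lam' b = Vee)"
    if "(a, b) \<in> insert (w, v) (fst c)" for a b
    using that new_cup oriented_cup[OF or, of a b] off[of a b] same[of a] same[of b] by auto
  show "lam' r = Vee \<or> lam' r = Wedge" if "r \<in> snd c - {w, v}" for r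
    using that oriented_ray[OF or, of r] same[of r] by simp
  show "r2 < r1" if "r1 \<in> snd c - {w, v}" "r2 \<in> snd c - {w, v}" "lam' r1 = Vee" "lam' r2 = Wedge" for r1 r2
    using that oriented_rays_ordered[OF or, of r1 r2] same[of r1] same[of r2] by simp
qed

lemma is_under_join_rays:
  assumes u: "is_under I mu c" and wv: "w \<in> snd c" "v \<in> snd c" "w < v" "mu w = Wedge" "mu v = Vee"
    and between: "\<And>r. r \<in> snd c \<Longrightarrow> w < r \<Longrightarrow> r < v \<Longrightarrow> False"
  shows "is_under I (mu \<circ> Transposition.transpose w v) (join_rays w v c)"
proof -
  have cd: "cup_diagram I c" and or: "oriented I c mu"
    using u unfolding is_under_def by auto
  have cd': "cup_diagram I (join_rays w v c)"
    using cup_diagram_join_rays[OF cd wv(1-3) between] .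
  have "oriented I (join_rays w v c) (mu \<circ> Transposition.transpose w v)"
    using oriented_join_rays[OF cd or wv(1,2)] wv(4,5) by simp
  moreover have "cdeg (join_rays w v c) (mu \<circ> Transposition.transpose w v) = 0"
  proof (subst cdeg_eq_0_iff[OF cup_diagram_finite[OF cd']], intro ballI)
    fix p assume "p \<in> fst (join_rays w v c)"
    then consider "p = (w, v)" | "p \<in> fst c"
      unfolding join_rays_def by auto
    then show "case p of (a, b) \<Rightarrow> (mu \<circ> Transposition.transpose w v) a \<noteq> Wedge"
    proof cases
      case 2
      obtain a b where p: "p = (a, b)"
        by fastforce
      with 2 have "a \<noteq> w" "a \<noteq> v"
        using cup_diagram_ray_not_end[OF cd] wv(1,2) unfolding cup_ends_iff by blast+
      with 2 p is_under_cup[OF u, of a b] show ?thesis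
        by simp
    qed (use wv in simp)
  qed
  ultimately show ?thesis
    using cd' unfolding is_under_def by blast
qed

text \<open>Requiring the rays of \<open>\<underline>\<mu>\<close> to carry the labels of \<open>\<lambda>\<close> keeps \<open>\<lambda>\<close> oriented
  when two of them are joined into a cup.\<close>

definition extendable_below :: "int set \<Rightarrow> (int \<Rightarrow> label) \<Rightarrow> (int \<Rightarrow> label) \<Rightarrow> bool" where
  "extendable_below I lam mu \<longleftrightarrow> wsub I mu lam \<and> (\<forall>r \<in> snd (under I mu). mu r = lam r) \<and>
     infinite {r \<in> snd (under I mu). mu r = Wedge} \<and> infinite {r \<in> snd (under I mu). mu r = Vee}"

lemma wsub_join_rays:
  assumes m: "wsub I mu lam" and wv: "w \<in> snd (under I mu)" "v \<in> snd (under I mu)" "w < v"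
    and labels: "mu w = Wedge" "mu v = Vee" "lam w = Wedge" "lam v = Vee"
    and between: "\<And>r. r \<in> snd (under I mu) \<Longrightarrow> w < r \<Longrightarrow> r < v \<Longrightarrow> False"
  shows "under I (mu \<circ> Transposition.transpose w v) = join_rays w v (under I mu)"
    and "wsub I (mu \<circ> Transposition.transpose w v) lam"
proof -
  note f = wsubD[OF m]
  have cd: "cup_diagram I (under I mu)"
    using f(3) unfolding is_under_def by auto
  have "w \<in> sign_vertices I mu" "v \<in> sign_vertices I mu"
    using wv labels cup_diagram_rays[OF cd] unfolding sign_vertices_def by auto
  then have ws: "wsim I mu (mu \<circ> Transposition.transpose w v)"
    using wsim_transpose[OF f(2)] by blast
  show under': "under I (mu \<circ> Transposition.transpose w v) = join_rays w v (under I mu)"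
    using under_eqI[OF wsim_weight(2)[OF ws] is_under_join_rays[OF f(3) wv labels(1,2) between]] .
  have "oriented I (join_rays w v (under I mu)) lam"
    using oriented_join_rays[OF cd f(4) wv(1,2)] labels(3,4) by simp
  with wsim_trans[OF wsim_sym[OF ws] wsim_sym[OF f(1)]] show "wsub I (mu \<circ> Transposition.transpose w v) lam"
    unfolding wsub_def under' by simp
qed

lemma extendable_below_step:
  assumes ext: "extendable_below I lam mu"
  obtains mu' where "extendable_below I lam mu'" "defect I mu' = Suc (defect I mu)"
proof -
  let ?c = "under I mu"
  have m: "wsub I mu lam" and agree: "\<And>r. r \<in> snd ?c \<Longrightarrow> mu r = lam r"
    and inf: "infinite {r \<in> snd ?c. mu r = Wedge}" "infinite {r \<in> snd ?c. mu r = Vee}"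
    using ext unfolding extendable_below_def by auto
  have cd: "cup_diagram I ?c" and om: "oriented I ?c mu"
    using wsubD(3)[OF m] unfolding is_under_def by auto
  obtain w0 v0 where w0v0: "w0 \<in> snd ?c" "mu w0 = Wedge" "v0 \<in> snd ?c" "mu v0 = Vee"
    using not_finite_existsD[OF inf(1)] not_finite_existsD[OF inf(2)] by auto
  obtain w v where wv: "w \<in> snd ?c" "mu w = Wedge" "v \<in> snd ?c" "mu v = Vee" "w < v"
    and between: "\<And>r. r \<in> snd ?c \<Longrightarrow> w < r \<Longrightarrow> r < v \<Longrightarrow> False"
    using innermost_opposite_rays[OF om w0v0] by blast
  define mu' where "mu' = mu \<circ> Transposition.transpose w v"
  have "lam w = Wedge" "lam v = Vee"
    using agree[OF wv(1)] agree[OF wv(3)] wv(2,4) by auto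
  then have under': "under I mu' = join_rays w v ?c" and m': "wsub I mu' lam"
    using wsub_join_rays[OF m wv(1,3,5,2,4) _ _ between] unfolding mu'_def by auto
  have off: "mu' r = mu r" if "r \<in> snd (under I mu')" for r
    using that unfolding under' join_rays_def by (simp add: mu'_def)
  have sub: "{r \<in> snd ?c. mu r = l} - {w, v} \<subseteq> {r \<in> snd (under I mu'). mu' r = l}" for l
    using off unfolding under' join_rays_def by auto
  have "infinite {r \<in> snd (under I mu'). mu' r = Wedge}" "infinite {r \<in> snd (under I mu'). mu' r = Vee}"
    by (rule infinite_super[OF sub Diff_infinite_finite], simp, rule inf)+
  with m' off agree have "extendable_below I lam mu'"
    unfolding extendable_below_def under' join_rays_def by auto
  moreover have "(w, v) \<notin> fst ?c"
    using cup_diagram_ray_not_end[OF cd wv(1)] unfolding cup_ends_iff by blast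
  then have "defect I mu' = Suc (defect I mu)"
    unfolding defect_def under' join_rays_def using cup_diagram_finite[OF cd] by simp
  ultimately show thesis
    by (rule that)
qed

lemma extendable_below_self:
  assumes w: "weight I lam" and unbounded: "\<not> block_defect I lam < \<infinity>"
  shows "extendable_below I lam lam"
proof -
  let ?c = "under I lam"
  have u: "is_under I lam ?c"
    using is_under_under[OF w] .
  have fin_ends: "finite (cup_ends (fst ?c))"
    using u finite_cup_ends cup_diagram_finite unfolding is_under_def by blast
  have "infinite {r \<in> snd ?c. lam r = l}" if "l = Vee \<or> l = Wedge" for l
  proof
    assume "finite {r \<in> snd ?c. lam r = l}"
    moreover have "{i \<in> I. lam i = l} \<subseteq> {r \<in> snd ?c. lam r = l} \<union> cup_ends (fst ?c)"
      using is_under_rays[OF u] that unfolding sign_vertices_def by auto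
    ultimately have "finite {i \<in> I. lam i = l}"
      using fin_ends by (meson finite_UnI finite_subset)
    with block_defect_finite_if_label_finite[OF w _ that] unbounded show False
      by blast
  qed
  moreover have "wsub I lam lam"
    using wsim_refl[OF w] u unfolding wsub_def is_under_def by blast
  ultimately show ?thesis
    unfolding extendable_below_def by blast
qed

theorem block_defect_finite_if_finite_weights_below:
  assumes w: "weight I lam" and fin: "finite {mu. wsub I mu lam}"
  shows "block_defect I lam < \<infinity>"
proof (rule ccontr)
  assume "\<not> block_defect I lam < \<infinity>"
  then have start: "extendable_below I lam lam"
    using extendable_below_self[OF w] by blast
  have deep: "\<exists>mu. extendable_below I lam mu \<and> defect I mu = defect I lam + k" for k
  proof (induction k)
    case 0
    then show ?case
      using start by auto
  next
    case (Suc k)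
    then obtain mu where "extendable_below I lam mu" "defect I mu = defect I lam + k"
      by blast
    then show ?case
      using extendable_below_step by (metis add_Suc_right)
  qed
  obtain B where B: "\<And>mu. wsub I mu lam \<Longrightarrow> defect I mu \<le> B"
    using finite_nat_set_iff_bounded_le[THEN iffD1, OF finite_imageI[OF fin, of "defect I"]] by auto
  obtain mu where "extendable_below I lam mu" "defect I mu = defect I lam + Suc B"
    using deep by blast
  with B[of mu] show False
    unfolding extendable_below_def by simp
qed

theorem lemma2p4:
  fixes I :: "int set" and lam :: "int \<Rightarrow> label"
  assumes "number_line I" and "weight I lam"
  shows "(finite {mu. wsub I lam mu} \<and> card {mu. wsub I lam mu} = 2 ^ defect I lam)
       \<and> (finite {mu. wsub I mu lam} \<longleftrightarrow> block_defect I lam < \<infinity>)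
       \<and> (\<forall>j::int. finite {mu. wsub I mu lam \<and> int (cdeg (under I mu) lam) = j})"
proof (intro conjI allI iffI)
  show "finite {mu. wsub I lam mu}" "card {mu. wsub I lam mu} = 2 ^ defect I lam"
    using card_weights_above[OF assms(2)] by auto
  show "block_defect I lam < \<infinity>" if "finite {mu. wsub I mu lam}"
    using block_defect_finite_if_finite_weights_below[OF assms(2) that] .
  show "finite {mu. wsub I mu lam}" if "block_defect I lam < \<infinity>"
    using finite_weights_below_if_block_defect_finite[OF assms(2) that] .
  show "finite {mu. wsub I mu lam \<and> int (cdeg (under I mu) lam) = j}" for j
    using finite_weights_below_of_degree[OF assms(2)] .
qed

end
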